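(* Let $l, m$ be positive integers and let $E_1,\dots,E_{m-1}$ be orthogonal $l\times l$ matrices satisfying $E_{\alpha}E_{\beta}+E_{\beta}E_{\alpha}=-2\delta_{\alpha\beta}\mathrm{Id}$ for $1\le\alpha,\beta\le m-1$. On $\mathbb{R}^{2l}=\mathbb{R}^l\oplus\mathbb{R}^l$ define $$P_0=\begin{pmatrix}\mathrm{Id}&0\\0&-\mathrm{Id}\end{pmatrix},\quad P_1=\begin{pmatrix}0&\mathrm{Id}\\ \mathrm{Id}&0\end{pmatrix},\quad P_{\alpha}=\begin{pmatrix}0&E_{\alpha-1}\\-E_{\alpha-1}&0\end{pmatrix}\ (2\le\alpha\le m).$$ Fix $0<t\le\frac{\pi}{4}$, put $a=\tan t$, $b=\cot t$, $Q_0=\begin{pmatrix}a\,\mathrm{Id}&0\\0&-b\,\mathrm{Id}\end{pmatrix}$ and $Q_{\alpha}=P_{\alpha}$ for $1\le\alpha\le m$, and let $$M_+^t=\{z=(x,y)\in\mathbb{R}^l\oplus\mathbb{R}^l:\ |x|=\cos t,\ |y|=\sin t,\ \langle x,y\rangle=0,\ \langle x,E_{\alpha}y\rangle=0\ (1\le\alpha\le m-1)\}$$ $$=\{z\in\mathbb{R}^{2l}: |z|=1,\ \langle z,Q_{\alpha}z\rangle=0\ (0\le\alpha\le m)\},$$ an embedded submanifold of $S^{2l-1}(1)$ of dimension $2l-m-2$. Then for every $z\in M_+^t$: (1) The normal space of $M_+^t$ in $S^{2l-1}(1)$ at $z$ is $N_zM_+^t=\mathrm{Span}\{Q_0z,Q_1z,\dots,Q_mz\}$,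 the tangent space is $T_zM_+^t=\{w\in\mathbb{R}^{2l}:\langle w,z\rangle=0,\ \langle w,Q_iz\rangle=0\ \text{for}\ 0\le i\le m\}$, and $\mathbb{R}^{2l}=T_zM_+^t\oplus N_zM_+^t\oplus\mathrm{Span}\{z\}$. (2) For $1\le\alpha\le m$, the shape operator $A_{\alpha}$ of $M_+^t$ with respect to the normal vector $Q_{\alpha}z$ has principal curvatures $1,0,-1$ with multiplicities $l-m-1$, $m$, $l-m-1$ respectively, and $T_zM_+^t=E_+(Q_{\alpha}z)\oplus E_0(Q_{\alpha}z)\oplus E_-(Q_{\alpha}z)$, where the principal spaces for $1,0,-1$ are $E_+(Q_{\alpha}z)=E_-(Q_{\alpha})\cap T_zM_+^t$, $E_0(Q_{\alpha}z)=\mathrm{Span}\{Q_{\alpha}Q_{\beta}z: 0\le\beta\le m,\ \beta\ne\alpha\}$, $E_-(Q_{\alpha}z)=E_+(Q_{\alpha})\cap T_zM_+^t$, with $E_{\pm}(Q_\alpha)$ the $\pm1$-eigenspaces of $Q_\alpha=P_\alpha$. (3) Let $E_+(Q_0)$ and $E_-(Q_0)$ be the eigenspaces of $Q_0$ with eigenvalues $a$ and $-b$ respectively. The shape operator $A_0$ with respect to the unit normal vector $Q_0z$ has principal curvatures $\cot t$, $0$, $-\tan t$ with multiplicities $l-m-1$, $m$, $l-m-1$ respectively, and $T_zM_+^t=E_+(Q_0z)\oplus E_0(Q_0z)\oplus E_-(Q_0z)$, where the principal spaces for $\cot t,0,-\tan t$ are $E_+(Q_0z)=E_-(Q_0)\cap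 T_zM_+^t$, $E_0(Q_0z)=\mathrm{Span}\{Q_0^{-1}Q_{\alpha}z:1\le\alpha\le m\}$, $E_-(Q_0z)=E_+(Q_0)\cap T_zM_+^t$.
   Context: $\{P_0,\dots,P_m\}$ is a symmetric Clifford system on $\mathbb{R}^{2l}$: symmetric orthogonal matrices with $P_\alpha P_\beta+P_\beta P_\alpha=2\delta_{\alpha\beta}\mathrm{Id}$, each having eigenvalues $\pm1$ with multiplicity $l$. For a normal vector $\xi$ of a submanifold of $S^{2l-1}(1)\subset\mathbb{R}^{2l}$, the shape operator is $A_\xi X=-(D_X\xi)^{\top}$ (tangential projection of the derivative), and principal curvatures are its eigenvalues. *)

theory Defs
  imports "HOL-Analysis.Analysis"
begin

definition Pmap :: "(nat \<Rightarrow> real^'l^'l) \<Rightarrow> nat \<Rightarrow> ((real^'l) \<times> (real^'l)) \<Rightarrow> ((real^'l) \<times> (real^'l))" where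
  "Pmap E \<alpha> z = (if \<alpha> = 0 then (fst z, - snd z)
                 else if \<alpha> = 1 then (snd z, fst z)
                 else (E (\<alpha> - 1) *v snd z, - (E (\<alpha> - 1) *v fst z)))"

definition Qmap :: "(nat \<Rightarrow> real^'l^'l) \<Rightarrow> real \<Rightarrow> nat \<Rightarrow> ((real^'l) \<times> (real^'l)) \<Rightarrow> ((real^'l) \<times> (real^'l))" where
  "Qmap E t \<alpha> z = (if \<alpha> = 0 then (tan t *\<^sub>R fst z, - (cot t *\<^sub>R snd z)) else Pmap E \<alpha> z)"

definition Mplus :: "(nat \<Rightarrow> real^'l^'l) \<Rightarrow> nat \<Rightarrow> real \<Rightarrow> ((real^'l) \<times> (real^'l)) set" where
  "Mplus E m t = {(x, y). norm x = cos t \<and> norm y = sin t \<and> x \<bullet> y = 0 \<and>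
                          (\<forall>\<alpha>\<in>{1..m-1}. x \<bullet> (E \<alpha> *v y) = 0)}"

definition tangent_space :: "'a::euclidean_space set \<Rightarrow> 'a \<Rightarrow> 'a set" where
  "tangent_space M z = {v. \<exists>\<gamma> e. e > 0 \<and> (\<forall>s\<in>{-e<..<e}. \<gamma> s \<in> M) \<and> \<gamma> 0 = z \<and>
                                   (\<gamma> has_vector_derivative v) (at 0)}"

definition normal_space_sphere :: "'a::euclidean_space set \<Rightarrow> 'a \<Rightarrow> 'a set" where
  "normal_space_sphere M z = {v. v \<bullet> z = 0 \<and> (\<forall>w\<in>tangent_space M z. v \<bullet> w = 0)}"

text \<open>Orthogonal projection onto a set S (meaningful for linear subspaces).\<close>
definition orth_proj :: "'a::euclidean_space set \<Rightarrow> 'a \<Rightarrow> 'a" where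
  "orth_proj S v = (THE u. u \<in> S \<and> (\<forall>w\<in>S. (v - u) \<bullet> w = 0))"

text \<open>Shape operator A_xi X = -(D_X xi)^T for a normal vector field xi (given as a
  differentiable map on the ambient space), at the point z of M.\<close>
definition shape_operator :: "'a::euclidean_space set \<Rightarrow> ('a \<Rightarrow> 'a) \<Rightarrow> 'a \<Rightarrow> 'a \<Rightarrow> 'a" where
  "shape_operator M \<xi> z X = - orth_proj (tangent_space M z) (frechet_derivative \<xi> (at z) X)"

definition eigenspace_in :: "'a::real_vector set \<Rightarrow> ('a \<Rightarrow> 'a) \<Rightarrow> real \<Rightarrow> 'a set" where
  "eigenspace_in S f c = {v \<in> S. f v = c *\<^sub>R v}"

definition direct_sum3 :: "'a::real_vector set \<Rightarrow> 'a set \<Rightarrow> 'a set \<Rightarrow> 'a set \<Rightarrow> bool" where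
  "direct_sum3 V A B C \<longleftrightarrow>
     V = {a + b + c | a b c. a \<in> A \<and> b \<in> B \<and> c \<in> C} \<and>
     (\<forall>a\<in>A. \<forall>b\<in>B. \<forall>c\<in>C. a + b + c = 0 \<longrightarrow> a = 0 \<and> b = 0 \<and> c = 0)"

end

(*
  Everything is expressed through the symmetric Clifford system P_0, ..., P_m:
  Q_a = P_a for a >= 1, and Q_0 = c0 Id + c1 P_0 with c1^2 - c0^2 = 1.  For z in M the
  vectors z, Q_0 z, ..., Q_m z are orthonormal.  Since M is cut out of the sphere by the
  quadrics <z, Q_a z> = 0, its tangent vectors satisfy the linearised equations; conversely an
  explicit curve (normalise y, project x off the frame E_j y, normalise x) realises every
  solution.

  The shape operator of the linear normal field Q_a is X |-> -proj_T (Q_a X).  It acts as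
  -lambda on the lambda-eigenspace of Q_a intersected with T, and as 0 on the span of the
  vectors that Q_a maps into the normal space.  These spaces are mutually orthogonal, and their
  dimensions add up to dim T = 2l - m - 2: each (+-1)-eigenspace of P_a has dimension l (another
  P_b swaps the two), and it meets T in codimension m + 1, because projecting the orthonormal
  family z, Q_b z (b /= a) onto it keeps that family orthogonal.
*)
theory Submission
  imports Defs
begin

section \<open>Orthogonal projections, complements and direct sums\<close>

lemma orth_proj_unique:
  fixes S :: "'a::euclidean_space set"
  assumes "subspace S" and "u \<in> S" and "\<forall>w\<in>S. (v - u) \<bullet> w = 0"
  shows "orth_proj S v = u"
  unfolding orth_proj_def
proof (rule the_equality)
  fix u' assume u': "u' \<in> S \<and> (\<forall>w\<in>S. (v - u') \<bullet> w = 0)"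
  have "u - u' \<in> S" using assms u' by (simp add: subspace_diff)
  then have "(u - u') \<bullet> (u - u') = (v - u') \<bullet> (u - u') - (v - u) \<bullet> (u - u')"
    by (simp add: algebra_simps)
  also have "\<dots> = 0" using \<open>u - u' \<in> S\<close> u' assms(3) by simp
  finally show "u' = u" by simp
qed (use assms in simp)

lemma orth_proj_exists:
  fixes S :: "'a::euclidean_space set"
  assumes "subspace S"
  obtains u where "u \<in> S" and "\<forall>w\<in>S. (v - u) \<bullet> w = 0"
proof -
  obtain y z where "y \<in> span S" "\<And>w. w \<in> span S \<Longrightarrow> orthogonal z w" "v = y + z"
    using orthogonal_subspace_decomp_exists[of S v] by metis
  moreover have "span S = S" using assms by simp
  ultimately show thesis by (intro that[of y]) (auto simp: orthogonal_def)
qed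

lemma orth_proj_id:
  fixes S :: "'a::euclidean_space set"
  shows "subspace S \<Longrightarrow> v \<in> S \<Longrightarrow> orth_proj S v = v"
  by (rule orth_proj_unique) auto

lemma orth_proj_eq_0:
  fixes S :: "'a::euclidean_space set"
  shows "subspace S \<Longrightarrow> \<forall>w\<in>S. v \<bullet> w = 0 \<Longrightarrow> orth_proj S v = 0"
  by (rule orth_proj_unique) (auto simp: subspace_0)

lemma orth_proj_add:
  fixes S :: "'a::euclidean_space set"
  assumes S: "subspace S"
  shows "orth_proj S (v1 + v2) = orth_proj S v1 + orth_proj S v2"
proof -
  obtain u1 where u1: "u1 \<in> S" "\<forall>w\<in>S. (v1 - u1) \<bullet> w = 0" using orth_proj_exists[OF S] .
  obtain u2 where u2: "u2 \<in> S" "\<forall>w\<in>S. (v2 - u2) \<bullet> w = 0" using orth_proj_exists[OF S] .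
  have "orth_proj S (v1 + v2) = u1 + u2"
    using u1 u2 S by (intro orth_proj_unique) (auto simp: subspace_add algebra_simps)
  then show ?thesis using orth_proj_unique[OF S u1] orth_proj_unique[OF S u2] by simp
qed

lemma subspace_eigenspace_in: "linear f \<Longrightarrow> subspace (eigenspace_in UNIV f c)"
  by (auto simp: subspace_def eigenspace_in_def linear_add linear_scale linear_0 algebra_simps)

lemma eigenspace_in_scaleR_add:
  assumes "b \<noteq> 0"
  shows "eigenspace_in UNIV (\<lambda>v. a *\<^sub>R v + b *\<^sub>R f v) (a + b * \<mu>) = eigenspace_in UNIV f \<mu>"
proof -
  have "a *\<^sub>R v + b *\<^sub>R f v = (a + b * \<mu>) *\<^sub>R v \<longleftrightarrow> b *\<^sub>R f v = b *\<^sub>R (\<mu> *\<^sub>R v)" for v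
    by (auto simp: algebra_simps)
  then show ?thesis using assms by (simp add: eigenspace_in_def del: scaleR_scaleR)
qed

lemma inner_span_eq_0:
  fixes p q :: "'a::real_inner"
  shows "q \<in> span G \<Longrightarrow> (\<And>g. g \<in> G \<Longrightarrow> p \<bullet> g = 0) \<Longrightarrow> p \<bullet> q = 0"
  using orthogonal_to_span[of q G p] by (auto simp: orthogonal_def)

lemma dim_span_pairwise_orthogonal:
  fixes f :: "'i \<Rightarrow> 'a::euclidean_space"
  assumes "finite I"
    and orth: "\<And>i j. i \<in> I \<Longrightarrow> j \<in> I \<Longrightarrow> i \<noteq> j \<Longrightarrow> f i \<bullet> f j = 0"
    and nz: "\<And>i. i \<in> I \<Longrightarrow> f i \<noteq> 0"
  shows "dim (span (f ` I)) = card I"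
proof -
  have "inj_on f I"
  proof (rule inj_onI, rule ccontr)
    fix i j assume "i \<in> I" "j \<in> I" "f i = f j" "i \<noteq> j"
    then have "f i \<bullet> f i = 0" using orth by metis
    then show False using nz \<open>i \<in> I\<close> by simp
  qed
  moreover have "independent (f ` I)"
    using orth nz by (intro pairwise_orthogonal_independent) (auto simp: pairwise_def orthogonal_def)
  ultimately show ?thesis by (simp add: dim_eq_card_independent card_image)
qed

text \<open>\<open>\<pi>\<close> is the orthogonal projection onto \<open>B\<close>.\<close>
lemma dim_orthogonal_complement_in_subspace:
  fixes h :: "'i \<Rightarrow> 'a::euclidean_space"
  assumes B: "subspace B" and fin: "finite I"
    and \<pi>_in: "\<And>v. \<pi> v \<in> B" and \<pi>_inner: "\<And>y v. y \<in> B \<Longrightarrow> y \<bullet> \<pi> v = y \<bullet> v"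
    and orth: "\<And>i j. i \<in> I \<Longrightarrow> j \<in> I \<Longrightarrow> i \<noteq> j \<Longrightarrow> \<pi> (h i) \<bullet> \<pi> (h j) = 0"
    and nz: "\<And>i. i \<in> I \<Longrightarrow> \<pi> (h i) \<noteq> 0"
  shows "dim {y \<in> B. \<forall>i\<in>I. y \<bullet> h i = 0} + card I = dim B"
proof -
  let ?A = "span ((\<lambda>i. \<pi> (h i)) ` I)"
  have "{y \<in> B. \<forall>x \<in> ?A. orthogonal x y} = {y \<in> B. \<forall>i\<in>I. y \<bullet> h i = 0}"
  proof (intro set_eqI iffI)
    fix y assume y: "y \<in> {y \<in> B. \<forall>x \<in> ?A. orthogonal x y}"
    have "\<pi> (h i) \<bullet> y = 0" if "i \<in> I" for i
      using y that span_base[of "\<pi> (h i)"] by (auto simp: orthogonal_def)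
    then show "y \<in> {y \<in> B. \<forall>i\<in>I. y \<bullet> h i = 0}" using y \<pi>_inner by (auto simp: inner_commute)
  next
    fix y assume y: "y \<in> {y \<in> B. \<forall>i\<in>I. y \<bullet> h i = 0}"
    have "y \<bullet> x = 0" if "x \<in> ?A" for x
      using that y \<pi>_inner by (auto intro: inner_span_eq_0)
    then show "y \<in> {y \<in> B. \<forall>x \<in> ?A. orthogonal x y}"
      using y by (auto simp: orthogonal_def inner_commute)
  qed
  moreover have "dim {y \<in> B. \<forall>x \<in> ?A. orthogonal x y} + dim ?A = dim B"
    using \<pi>_in B by (intro dim_subspace_orthogonal_to_vectors span_minimal) auto
  moreover have "dim ?A = card I" by (rule dim_span_pairwise_orthogonal[OF fin orth nz])
  ultimately show ?thesis by simp
qed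

lemma orthogonal_sum3_eq_0:
  fixes p q r :: "'a::real_inner"
  assumes "p \<bullet> q = 0" "p \<bullet> r = 0" "q \<bullet> r = 0" "p + q + r = 0"
  shows "p = 0 \<and> q = 0 \<and> r = 0"
proof -
  have r: "r = - p - q" using assms(4) by (simp add: algebra_simps eq_neg_iff_add_eq_0)
  have "p \<bullet> p = 0" using assms(1,2) by (simp add: r inner_diff_right)
  moreover have "q \<bullet> q = 0" using assms(1,3) by (simp add: r inner_diff_right inner_commute)
  ultimately show ?thesis using assms(4) by simp
qed

lemma direct_sum3_orthogonal:
  fixes T :: "'a::euclidean_space set"
  assumes T: "subspace T" and U: "subspace U" and V: "subspace V" and W: "subspace W"
    and sub: "U \<subseteq> T" "V \<subseteq> T" "W \<subseteq> T"
    and UV: "\<And>u v. u \<in> U \<Longrightarrow> v \<in> V \<Longrightarrow> u \<bullet> v = 0"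
    and UW: "\<And>u w. u \<in> U \<Longrightarrow> w \<in> W \<Longrightarrow> u \<bullet> w = 0"
    and VW: "\<And>v w. v \<in> V \<Longrightarrow> w \<in> W \<Longrightarrow> v \<bullet> w = 0"
    and dim: "dim U + dim V + dim W = dim T"
  shows "direct_sum3 T U V W"
proof -
  let ?UV = "{u + v |u v. u \<in> U \<and> v \<in> V}"
  let ?S = "{x + w |x w. x \<in> ?UV \<and> w \<in> W}"
  have UV_sub: "subspace ?UV" by (rule subspace_sums[OF U V])
  have "U \<inter> V \<subseteq> {0}"
  proof
    fix x assume "x \<in> U \<inter> V"
    then have "x \<bullet> x = 0" using UV by blast
    then show "x \<in> {0}" by simp
  qed
  then have "dim (U \<inter> V) = 0" by (simp only: dim_eq_0)
  then have "dim ?UV = dim U + dim V" using dim_sums_Int[OF U V] by linarith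
  moreover have "?UV \<inter> W \<subseteq> {0}"
  proof
    fix x assume x: "x \<in> ?UV \<inter> W"
    then obtain u v where "u \<in> U" "v \<in> V" "x = u + v" by blast
    then have "x \<bullet> x = 0" using x UW VW by (simp add: inner_add_left)
    then show "x \<in> {0}" by simp
  qed
  then have "dim (?UV \<inter> W) = 0" by (simp only: dim_eq_0)
  then have "dim ?S = dim ?UV + dim W" using dim_sums_Int[OF UV_sub W] by linarith
  moreover have "?S \<subseteq> T" using sub T by (auto intro!: subspace_add)
  ultimately have "?S = T"
    using dim by (intro subspace_dim_equal[OF subspace_sums[OF UV_sub W] T]) auto
  moreover have "?S = {u + v + w | u v w. u \<in> U \<and> v \<in> V \<and> w \<in> W}" by blast
  ultimately have "T = {u + v + w | u v w. u \<in> U \<and> v \<in> V \<and> w \<in> W}" by simp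
  moreover have "u = 0 \<and> v = 0 \<and> w = 0"
    if "u \<in> U" "v \<in> V" "w \<in> W" "u + v + w = 0" for u v w
    using that UV UW VW by (intro orthogonal_sum3_eq_0) auto
  ultimately show ?thesis unfolding direct_sum3_def by blast
qed

lemma inner_linear_span_eq_0:
  fixes f :: "'a::real_inner \<Rightarrow> 'a"
  assumes f: "linear f" and S: "\<And>x y. x \<in> S \<Longrightarrow> y \<in> S \<Longrightarrow> x \<bullet> f y = 0"
    and "u \<in> span S" "v \<in> span S"
  shows "u \<bullet> f v = 0"
proof -
  have "u \<bullet> f y = 0" if "y \<in> S" for y
    using inner_span_eq_0[OF \<open>u \<in> span S\<close>, of "f y"] S that by (simp add: inner_commute)
  moreover have "f v \<in> span (f ` S)" using span_linear_image[OF f] \<open>v \<in> span S\<close> by blast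
  ultimately show ?thesis using inner_span_eq_0[of "f v" "f ` S" u] by blast
qed

lemma orthogonal_decomposition:
  fixes v :: "'a::euclidean_space"
  shows "\<exists>u n. v = u + n \<and> u \<in> span S \<and> (\<forall>w\<in>S. n \<bullet> w = 0)"
proof -
  obtain u n where "u \<in> span S" "\<And>w. w \<in> span S \<Longrightarrow> orthogonal n w" "v = u + n"
    using orthogonal_subspace_decomp_exists[of S v] by metis
  then show ?thesis by (intro exI[of _ u] exI[of _ n]) (auto simp: orthogonal_def intro: span_base)
qed

lemma
  fixes z :: "'a::euclidean_space"
  assumes G_perp: "\<And>g. g \<in> G \<Longrightarrow> g \<bullet> z = 0"
  defines "T \<equiv> {w. w \<bullet> z = 0 \<and> (\<forall>g\<in>G. w \<bullet> g = 0)}"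
  shows orthogonal_complement_constraints: "{v. v \<bullet> z = 0 \<and> (\<forall>w\<in>T. v \<bullet> w = 0)} = span G"
    and direct_sum3_constraints: "direct_sum3 UNIV T (span G) (span {z})"
proof -
  let ?N = "{v. v \<bullet> z = 0 \<and> (\<forall>w\<in>T. v \<bullet> w = 0)}"
  have span_G_perp: "u \<bullet> z = 0 \<and> (\<forall>w\<in>T. u \<bullet> w = 0)" if "u \<in> span G" for u
  proof -
    have "z \<bullet> u = 0" using inner_span_eq_0[OF that, of z] G_perp by (simp add: inner_commute)
    moreover have "w \<bullet> u = 0" if "w \<in> T" for w
      using inner_span_eq_0[OF \<open>u \<in> span G\<close>, of w] that by (simp add: T_def)
    ultimately show ?thesis by (auto simp: inner_commute)
  qed
  show N: "?N = span G"
  proof (intro equalityI subsetI)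
    fix v assume v: "v \<in> ?N"
    obtain u n where "v = u + n" "u \<in> span G" and n: "\<forall>g\<in>G. n \<bullet> g = 0" using orthogonal_decomposition by blast
    moreover have "n \<in> T" using v span_G_perp[OF \<open>u \<in> span G\<close>] n \<open>v = u + n\<close>
      by (simp add: T_def inner_diff_left[of v u z, symmetric] algebra_simps)
    ultimately have "n \<bullet> n = 0"
      using v span_G_perp[OF \<open>u \<in> span G\<close>] by (simp add: inner_add_left)
    then show "v \<in> span G" using \<open>v = u + n\<close> \<open>u \<in> span G\<close> by simp
  qed (use span_G_perp in auto)
  have "v \<in> {a + b + c | a b c. a \<in> T \<and> b \<in> span G \<and> c \<in> span {z}}" for v
  proof -
    obtain u n where "v = u + n" "u \<in> span (insert z G)" and n: "\<forall>w\<in>insert z G. n \<bullet> w = 0"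
      using orthogonal_decomposition by blast
    moreover obtain k where "u - k *\<^sub>R z \<in> span G" using \<open>u \<in> span (insert z G)\<close> span_breakdown_eq by blast
    moreover have "n \<in> T" using n by (simp add: T_def)
    moreover have "k *\<^sub>R z \<in> span {z}" by (simp add: span_base span_scale)
    moreover have "v = n + (u - k *\<^sub>R z) + k *\<^sub>R z" using \<open>v = u + n\<close> by simp
    ultimately show ?thesis by blast
  qed
  moreover have "a = 0 \<and> b = 0 \<and> c = 0"
    if abc: "a \<in> T" "b \<in> span G" "c \<in> span {z}" "a + b + c = 0" for a b c
  proof (rule orthogonal_sum3_eq_0)
    obtain k where c: "c = k *\<^sub>R z" using abc(3) by (auto simp: span_singleton)
    show "a \<bullet> b = 0" using span_G_perp[OF abc(2)] abc(1) by (simp add: inner_commute)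
    show "a \<bullet> c = 0" "b \<bullet> c = 0" using abc(1) span_G_perp[OF abc(2)] by (simp_all add: T_def c)
  qed (rule abc(4))
  ultimately show "direct_sum3 UNIV T (span G) (span {z})" unfolding direct_sum3_def by blast
qed

lemma eigenspaces_direct_sum3:
  fixes A :: "'a::real_vector \<Rightarrow> 'a"
  assumes T: "subspace T" and U: "subspace U" and V: "subspace V" and W: "subspace W"
    and sub: "U \<subseteq> T" "V \<subseteq> T" "W \<subseteq> T" and ds: "direct_sum3 T U V W"
    and add: "\<And>x y. x \<in> T \<Longrightarrow> y \<in> T \<Longrightarrow> A (x + y) = A x + A y"
    and AU: "\<And>u. u \<in> U \<Longrightarrow> A u = \<kappa> *\<^sub>R u"
    and AV: "\<And>v. v \<in> V \<Longrightarrow> A v = 0"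
    and AW: "\<And>w. w \<in> W \<Longrightarrow> A w = \<mu> *\<^sub>R w"
    and distinct: "\<kappa> \<noteq> 0" "\<mu> \<noteq> 0" "\<kappa> \<noteq> \<mu>"
  shows "{c. \<exists>X\<in>T. X \<noteq> 0 \<and> A X = c *\<^sub>R X} \<subseteq> {\<kappa>, 0, \<mu>}"
    and "eigenspace_in T A \<kappa> = U" and "eigenspace_in T A 0 = V" and "eigenspace_in T A \<mu> = W"
proof -
  have T_sum: "T = {u + v + w | u v w. u \<in> U \<and> v \<in> V \<and> w \<in> W}"
    and indep: "\<And>u v w. u \<in> U \<Longrightarrow> v \<in> V \<Longrightarrow> w \<in> W \<Longrightarrow> u + v + w = 0 \<Longrightarrow> u = 0 \<and> v = 0 \<and> w = 0"
    using ds by (auto simp: direct_sum3_def)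
  have components: "\<exists>u\<in>U. \<exists>v\<in>V. \<exists>w\<in>W. X = u + v + w \<and>
      (\<kappa> - c) *\<^sub>R u = 0 \<and> c *\<^sub>R v = 0 \<and> (\<mu> - c) *\<^sub>R w = 0"
    if X: "X \<in> eigenspace_in T A c" for X c
  proof -
    obtain u v w where uvw: "u \<in> U" "v \<in> V" "w \<in> W" "X = u + v + w"
      using X T_sum by (auto simp: eigenspace_in_def)
    then have "u \<in> T" "v \<in> T" "w \<in> T" using sub by auto
    then have "A X = \<kappa> *\<^sub>R u + \<mu> *\<^sub>R w"
      using add T uvw AU AV AW by (simp add: subspace_add)
    then have "(\<kappa> - c) *\<^sub>R u + (- c) *\<^sub>R v + (\<mu> - c) *\<^sub>R w = 0"
      using X uvw(4) by (simp add: eigenspace_in_def algebra_simps)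
    moreover have "(\<kappa> - c) *\<^sub>R u \<in> U" "(- c) *\<^sub>R v \<in> V" "(\<mu> - c) *\<^sub>R w \<in> W"
      using uvw U V W by (auto simp: subspace_scale subspace_neg)
    ultimately show ?thesis using indep uvw by fastforce
  qed
  show "{c. \<exists>X\<in>T. X \<noteq> 0 \<and> A X = c *\<^sub>R X} \<subseteq> {\<kappa>, 0, \<mu>}"
  proof
    fix c assume "c \<in> {c. \<exists>X\<in>T. X \<noteq> 0 \<and> A X = c *\<^sub>R X}"
    then obtain X where "X \<in> eigenspace_in T A c" "X \<noteq> 0" by (auto simp: eigenspace_in_def)
    then show "c \<in> {\<kappa>, 0, \<mu>}" using components by force
  qed
  show "eigenspace_in T A \<kappa> = U"
  proof (intro equalityI subsetI)
    fix X assume "X \<in> eigenspace_in T A \<kappa>"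
    from components[OF this] distinct show "X \<in> U" by auto
  qed (use sub AU in \<open>auto simp: eigenspace_in_def\<close>)
  show "eigenspace_in T A 0 = V"
  proof (intro equalityI subsetI)
    fix X assume "X \<in> eigenspace_in T A 0"
    from components[OF this] distinct show "X \<in> V" by auto
  qed (use sub AV in \<open>auto simp: eigenspace_in_def\<close>)
  show "eigenspace_in T A \<mu> = W"
  proof (intro equalityI subsetI)
    fix X assume "X \<in> eigenspace_in T A \<mu>"
    from components[OF this] distinct show "X \<in> W" by auto
  qed (use sub AW in \<open>auto simp: eigenspace_in_def\<close>)
qed

lemma direct_sum3_eigenspaces_symmetric:
  fixes S :: "'a::euclidean_space \<Rightarrow> 'a"
  assumes T: "subspace T" and S: "linear S" and S_sym: "\<And>u v. S u \<bullet> v = u \<bullet> S v"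
    and G: "G \<subseteq> T" and SG: "\<And>g w. g \<in> G \<Longrightarrow> w \<in> T \<Longrightarrow> S g \<bullet> w = 0"
    and distinct: "\<kappa> \<noteq> 0" "\<mu> \<noteq> 0" "\<kappa> \<noteq> \<mu>"
    and dim: "dim (eigenspace_in UNIV S \<kappa> \<inter> T) + dim (span G) + dim (eigenspace_in UNIV S \<mu> \<inter> T) = dim T"
  shows "direct_sum3 T (eigenspace_in UNIV S \<kappa> \<inter> T) (span G) (eigenspace_in UNIV S \<mu> \<inter> T)"
proof -
  have eigen_perp_G: "x \<bullet> q = 0" if "x \<in> eigenspace_in UNIV S c \<inter> T" "c \<noteq> 0" "q \<in> span G" for x q c
  proof (rule inner_span_eq_0[OF that(3)])
    fix g assume "g \<in> G"
    then have "c * (x \<bullet> g) = 0"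
      using that(1) S_sym[of x g] SG[of g x] by (simp add: eigenspace_in_def inner_commute)
    then show "x \<bullet> g = 0" using that(2) by simp
  qed
  have "u \<bullet> w = 0" if "u \<in> eigenspace_in UNIV S \<kappa>" "w \<in> eigenspace_in UNIV S \<mu>" for u w
  proof -
    have "\<kappa> * (u \<bullet> w) = \<mu> * (u \<bullet> w)"
      using that S_sym[of u w] by (simp add: eigenspace_in_def)
    then show ?thesis using distinct by simp
  qed
  moreover have "q \<bullet> w = 0" if "q \<in> span G" "w \<in> eigenspace_in UNIV S \<mu> \<inter> T" for q w
    using eigen_perp_G[of w \<mu> q] that distinct by (simp add: inner_commute)
  moreover have "subspace (eigenspace_in UNIV S c \<inter> T)" for c
    using subspace_eigenspace_in[OF S] T by (rule subspace_inter)
  ultimately show ?thesis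
    using G T dim eigen_perp_G distinct
    by (intro direct_sum3_orthogonal[OF T]) (auto simp: span_minimal)
qed

text \<open>\<open>A\<close> is the shape operator of the linear normal field \<open>S\<close> of a submanifold of the sphere
  with tangent space \<open>T\<close>.\<close>
lemma principal_spaces_symmetric:
  fixes S :: "'a::euclidean_space \<Rightarrow> 'a"
  assumes T: "subspace T" and S: "linear S" and S_sym: "\<And>u v. S u \<bullet> v = u \<bullet> S v"
    and G: "G \<subseteq> T" and SG: "\<And>g w. g \<in> G \<Longrightarrow> w \<in> T \<Longrightarrow> S g \<bullet> w = 0"
    and distinct: "\<kappa> \<noteq> 0" "\<mu> \<noteq> 0" "\<kappa> \<noteq> \<mu>"
    and dim: "dim (eigenspace_in UNIV S \<kappa> \<inter> T) + dim (span G) + dim (eigenspace_in UNIV S \<mu> \<inter> T) = dim T"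
  defines "A \<equiv> \<lambda>X. - orth_proj T (S X)"
    and "U \<equiv> eigenspace_in UNIV S \<kappa> \<inter> T" and "W \<equiv> eigenspace_in UNIV S \<mu> \<inter> T"
  shows "{c. \<exists>X\<in>T. X \<noteq> 0 \<and> A X = c *\<^sub>R X} \<subseteq> {- \<kappa>, 0, - \<mu>}"
    and "eigenspace_in T A (- \<kappa>) = U" and "eigenspace_in T A 0 = span G"
    and "eigenspace_in T A (- \<mu>) = W"
    and "direct_sum3 T U (span G) W"
proof -
  show ds: "direct_sum3 T U (span G) W"
    unfolding U_def W_def by (rule direct_sum3_eigenspaces_symmetric[OF T S S_sym G SG distinct dim])
  have U: "subspace U" and W: "subspace W"
    unfolding U_def W_def using subspace_eigenspace_in[OF S] T by (auto intro: subspace_inter)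
  have add: "A (x + y) = A x + A y" if "x \<in> T" "y \<in> T" for x y
    by (simp add: A_def linear_add[OF S] orth_proj_add[OF T])
  have AU: "A u = (- \<kappa>) *\<^sub>R u" if "u \<in> U" for u
    using that T by (simp add: A_def U_def eigenspace_in_def orth_proj_id subspace_scale)
  have AW: "A w = (- \<mu>) *\<^sub>R w" if "w \<in> W" for w
    using that T by (simp add: A_def W_def eigenspace_in_def orth_proj_id subspace_scale)
  have AG: "A q = 0" if "q \<in> span G" for q
  proof -
    have "S w \<bullet> q = 0" if "w \<in> T" for w
      using \<open>q \<in> span G\<close> that SG S_sym by (metis inner_span_eq_0 inner_commute)
    then have "\<forall>w\<in>T. S q \<bullet> w = 0" using S_sym by (simp add: inner_commute)
    then show ?thesis by (simp add: A_def orth_proj_eq_0[OF T])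
  qed
  have sub: "U \<subseteq> T" "span G \<subseteq> T" "W \<subseteq> T" using G T by (auto simp: span_minimal U_def W_def)
  have "- \<kappa> \<noteq> 0" "- \<mu> \<noteq> 0" "- \<kappa> \<noteq> - \<mu>" using distinct by auto
  note eigenspaces = eigenspaces_direct_sum3[OF T U subspace_span W sub ds _ _ _ _ this, of A]
  show "{c. \<exists>X\<in>T. X \<noteq> 0 \<and> A X = c *\<^sub>R X} \<subseteq> {- \<kappa>, 0, - \<mu>}"
    and "eigenspace_in T A (- \<kappa>) = U" and "eigenspace_in T A 0 = span G"
    and "eigenspace_in T A (- \<mu>) = W"
    by (rule eigenspaces; (rule add AU AG AW; assumption))+
qed

lemma inner_frame_projection_residual:
  fixes f :: "'i \<Rightarrow> 'a::real_inner"
  assumes "finite I" and frame: "\<And>i j. i \<in> I \<Longrightarrow> j \<in> I \<Longrightarrow> f i \<bullet> f j = (if i = j then c else 0)"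
    and "c \<noteq> 0" and "j \<in> I"
  shows "(u - (\<Sum>i\<in>I. (u \<bullet> f i / c) *\<^sub>R f i)) \<bullet> f j = 0"
proof -
  have "(\<Sum>i\<in>I. (u \<bullet> f i / c) *\<^sub>R f i) \<bullet> f j = (\<Sum>i\<in>I. (u \<bullet> f i / c) * (if i = j then c else 0))"
    using \<open>j \<in> I\<close> frame by (simp add: inner_sum_left)
  also have "\<dots> = u \<bullet> f j"
    using assms by (simp add: if_distrib[of "\<lambda>x. _ * x"] cong: if_cong)
  finally show ?thesis by (simp add: inner_diff_left)
qed

section \<open>Velocities of curves\<close>

lemma has_vector_derivative_rescale:
  fixes f :: "real \<Rightarrow> 'a::real_inner"
  assumes f: "(f has_vector_derivative f') (at 0)" and r: "norm (f 0) = r" "r > 0"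
    and orth: "f 0 \<bullet> f' = 0"
  shows "((\<lambda>s. (r / norm (f s)) *\<^sub>R f s) has_vector_derivative f') (at 0)"
proof -
  have f0: "f 0 \<noteq> 0" using r by auto
  have fd: "(f has_derivative (\<lambda>h. h *\<^sub>R f')) (at 0)" using f by (simp add: has_vector_derivative_def)
  have "((\<lambda>s. norm (f s)) has_derivative (\<lambda>h. (h *\<^sub>R f') \<bullet> sgn (f 0))) (at 0)"
    using has_derivative_compose[OF fd has_derivative_norm[OF f0]] by simp
  then have "((\<lambda>s. norm (f s)) has_derivative (\<lambda>h. 0)) (at 0)"
    using orth by (simp add: sgn_div_norm inner_commute)
  from has_derivative_divide[OF has_derivative_const this] f0
  have "((\<lambda>s. r / norm (f s)) has_derivative (\<lambda>h. 0)) (at 0)" by simp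
  from has_derivative_scaleR[OF this fd] show ?thesis
    using r by (simp add: has_vector_derivative_def)
qed

lemma tangent_space_orthogonal_quadric:
  fixes S :: "'a::euclidean_space \<Rightarrow> 'a"
  assumes S: "bounded_linear S" and S_sym: "\<And>u v. S u \<bullet> v = u \<bullet> S v"
    and M: "M \<subseteq> {x. x \<bullet> S x = c}" and v: "v \<in> tangent_space M z"
  shows "v \<bullet> S z = 0"
proof -
  obtain \<gamma> e where e: "e > 0" and \<gamma>: "\<forall>s\<in>{-e<..<e}. \<gamma> s \<in> M" and \<gamma>0: "\<gamma> 0 = z"
    and d\<gamma>: "(\<gamma> has_derivative (\<lambda>h. h *\<^sub>R v)) (at 0)"
    using v by (auto simp: tangent_space_def has_vector_derivative_def)
  have "((\<lambda>s. \<gamma> s \<bullet> S (\<gamma> s)) has_derivative (\<lambda>h. \<gamma> 0 \<bullet> S (h *\<^sub>R v) + (h *\<^sub>R v) \<bullet> S (\<gamma> 0))) (at 0)"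
    by (rule has_derivative_inner[OF d\<gamma> bounded_linear.has_derivative[OF S d\<gamma>]])
  moreover have "((\<lambda>s. \<gamma> s \<bullet> S (\<gamma> s)) has_derivative (\<lambda>h. 0)) (at 0)"
  proof (rule has_derivative_transform_within_open[of "\<lambda>s. c" _ 0 UNIV "{-e<..<e}"])
    show "\<And>s. s \<in> {-e<..<e} \<Longrightarrow> c = \<gamma> s \<bullet> S (\<gamma> s)" using \<gamma> M by auto
  qed (use e in auto)
  ultimately have "(\<lambda>h. \<gamma> 0 \<bullet> S (h *\<^sub>R v) + (h *\<^sub>R v) \<bullet> S (\<gamma> 0)) = (\<lambda>h. 0)"
    by (rule has_derivative_unique)
  from fun_cong[OF this, of 1] have "z \<bullet> S v + v \<bullet> S z = 0" using \<gamma>0 by simp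
  then show ?thesis using S_sym[of z v] by (simp add: inner_commute)
qed

lemma has_derivative_remove_frame_components:
  fixes u :: "real \<Rightarrow> 'a::real_inner" and f :: "'i \<Rightarrow> real \<Rightarrow> 'a"
  assumes "finite I" and "c \<noteq> 0"
    and u: "(u has_derivative (\<lambda>h. h *\<^sub>R u')) (at 0)"
    and f: "\<And>i. i \<in> I \<Longrightarrow> (f i has_derivative (\<lambda>h. h *\<^sub>R f' i)) (at 0)"
    and orth: "\<And>i. i \<in> I \<Longrightarrow> u 0 \<bullet> f i 0 = 0"
    and orth': "\<And>i. i \<in> I \<Longrightarrow> u' \<bullet> f i 0 + u 0 \<bullet> f' i = 0"
  shows "((\<lambda>s. u s - (\<Sum>i\<in>I. (u s \<bullet> f i s / c) *\<^sub>R f i s)) has_derivative (\<lambda>h. h *\<^sub>R u')) (at 0)"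
proof -
  have "((\<lambda>s. (u s \<bullet> f i s / c) *\<^sub>R f i s) has_derivative (\<lambda>h. 0)) (at 0)" if i: "i \<in> I" for i
  proof -
    have "((\<lambda>s. u s \<bullet> f i s) has_derivative (\<lambda>h. u 0 \<bullet> (h *\<^sub>R f' i) + (h *\<^sub>R u') \<bullet> f i 0)) (at 0)"
      by (rule has_derivative_inner[OF u f[OF i]])
    moreover have "u 0 \<bullet> (h *\<^sub>R f' i) + (h *\<^sub>R u') \<bullet> f i 0 = h * (u' \<bullet> f i 0 + u 0 \<bullet> f' i)" for h
      by (simp add: algebra_simps)
    ultimately have "((\<lambda>s. u s \<bullet> f i s) has_derivative (\<lambda>h. 0)) (at 0)"
      using orth'[OF i] by simp
    from has_derivative_divide'[OF this has_derivative_const \<open>c \<noteq> 0\<close>]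
    have "((\<lambda>s. u s \<bullet> f i s / c) has_derivative (\<lambda>h. 0)) (at 0)" by simp
    from has_derivative_scaleR[OF this f[OF i]] show ?thesis using orth[OF i] by simp
  qed
  then have "((\<lambda>s. \<Sum>i\<in>I. (u s \<bullet> f i s / c) *\<^sub>R f i s) has_derivative (\<lambda>h. \<Sum>i\<in>I. 0)) (at 0)"
    by (rule has_derivative_sum)
  from has_derivative_diff[OF u this] show ?thesis by simp
qed

section \<open>Symmetric Clifford systems\<close>

locale symmetric_clifford_system =
  fixes P :: "nat \<Rightarrow> 'a::euclidean_space \<Rightarrow> 'a" and m :: nat
  assumes linear_P: "i \<le> m \<Longrightarrow> linear (P i)"
    and P_symmetric: "i \<le> m \<Longrightarrow> P i u \<bullet> v = u \<bullet> P i v"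
    and P_involutive: "i \<le> m \<Longrightarrow> P i (P i u) = u"
    and P_anticommute: "i \<le> m \<Longrightarrow> j \<le> m \<Longrightarrow> i \<noteq> j \<Longrightarrow> P i (P j u) = - P j (P i u)"
begin

lemma P_isometry: "i \<le> m \<Longrightarrow> P i u \<bullet> P i v = u \<bullet> v"
  by (simp add: P_symmetric P_involutive)

lemma P_sandwich: "i \<le> m \<Longrightarrow> j \<le> m \<Longrightarrow> i \<noteq> j \<Longrightarrow> P i (P j (P i u)) = - P j u"
  using P_anticommute[of j i u] by (simp add: P_involutive linear_neg[OF linear_P])

lemma inner_P_P_self: "i \<le> m \<Longrightarrow> j \<le> m \<Longrightarrow> i \<noteq> j \<Longrightarrow> u \<bullet> P i (P j u) = 0"
proof -
  assume ij: "i \<le> m" "j \<le> m" "i \<noteq> j"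
  have "u \<bullet> P i (P j u) = P i u \<bullet> P j u"
    using ij by (simp add: P_symmetric)
  also have "\<dots> = P j (P i u) \<bullet> u"
    using ij by (simp add: P_symmetric)
  also have "\<dots> = - (u \<bullet> P i (P j u))"
    using ij P_anticommute[of j i u] by (simp add: inner_commute)
  finally show ?thesis by simp
qed

lemma inner_P_P_P_self:
  assumes "i \<le> m" "j \<le> m" "k \<le> m" "i \<noteq> j" "i \<noteq> k" "j \<noteq> k"
  shows "u \<bullet> P i (P j (P k u)) = 0"
proof -
  have "u \<bullet> P i (P j (P k u)) = P j (P i u) \<bullet> P k u"
    using assms by (simp add: P_symmetric)
  also have "\<dots> = P k (P j (P i u)) \<bullet> u"
    using assms by (simp add: P_symmetric)
  also have "P k (P j (P i u)) = - P i (P j (P k u))"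
    using assms P_anticommute[of k j "P i u"] P_anticommute[of k i u] P_anticommute[of j i "P k u"]
    by (simp add: linear_neg[OF linear_P])
  finally show ?thesis by (simp add: inner_commute)
qed

lemma eigenspace_P_orthogonal:
  assumes "a \<le> m" "\<sigma> * \<sigma> = 1"
  shows "eigenspace_in UNIV (P a) (- \<sigma>) = {y. \<forall>x\<in>eigenspace_in UNIV (P a) \<sigma>. orthogonal x y}"
proof (intro equalityI subsetI CollectI ballI)
  fix x y assume "y \<in> eigenspace_in UNIV (P a) (- \<sigma>)" "x \<in> eigenspace_in UNIV (P a) \<sigma>"
  then have "\<sigma> * (x \<bullet> y) = - \<sigma> * (x \<bullet> y)"
    using P_symmetric[OF assms(1), of x y] by (simp add: eigenspace_in_def)
  then show "orthogonal x y" using assms(2) by (auto simp: orthogonal_def)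
next
  fix y assume y: "y \<in> {y. \<forall>x\<in>eigenspace_in UNIV (P a) \<sigma>. orthogonal x y}"
  define p where "p = y + \<sigma> *\<^sub>R P a y"
  have "P a p = \<sigma> *\<^sub>R p"
    using assms by (simp add: p_def linear_add[OF linear_P] linear_scale[OF linear_P] P_involutive algebra_simps)
  then have "p \<bullet> y = 0" and Pp: "P a p = \<sigma> *\<^sub>R p"
    using y by (auto simp: eigenspace_in_def orthogonal_def)
  then have "p \<bullet> p = 0"
    using assms P_symmetric[OF assms(1), of p y] by (simp add: p_def inner_add_right)
  then have "\<sigma> *\<^sub>R (y + \<sigma> *\<^sub>R P a y) = 0" by (simp add: p_def)
  then show "y \<in> eigenspace_in UNIV (P a) (- \<sigma>)"
    using assms(2) by (simp add: eigenspace_in_def algebra_simps eq_neg_iff_add_eq_0)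
qed

text \<open>Another member \<open>P b\<close> of the system swaps the two eigenspaces of \<open>P a\<close>.\<close>
lemma dim_eigenspace_P:
  assumes "1 \<le> m" "a \<le> m" "\<sigma> \<in> {1, -1}"
  shows "2 * dim (eigenspace_in UNIV (P a) \<sigma>) = DIM('a)"
proof -
  have \<sigma>: "\<sigma> * \<sigma> = 1" using assms(3) by auto
  define b :: nat where "b = (if a = 0 then 1 else 0)"
  have b: "b \<le> m" "b \<noteq> a" using assms by (auto simp: b_def)
  let ?E = "\<lambda>\<sigma>. eigenspace_in UNIV (P a) \<sigma>"
  have "dim {y \<in> UNIV. \<forall>x\<in>?E \<sigma>. orthogonal x y} + dim (?E \<sigma>) = dim (UNIV :: 'a set)"
    by (rule dim_subspace_orthogonal_to_vectors) (simp_all add: subspace_eigenspace_in[OF linear_P[OF assms(2)]])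
  then have dims: "dim (?E (- \<sigma>)) + dim (?E \<sigma>) = DIM('a)"
    unfolding eigenspace_P_orthogonal[OF assms(2) \<sigma>] by simp
  have swap: "P b x \<in> ?E (- c)" if "x \<in> ?E c" for x c
    using that P_anticommute[OF assms(2) b(1) b(2)[symmetric], of x]
    by (simp add: eigenspace_in_def linear_scale[OF linear_P[OF b(1)]])
  have image: "P b ` ?E \<sigma> = ?E (- \<sigma>)"
  proof (intro equalityI subsetI)
    fix y assume "y \<in> ?E (- \<sigma>)"
    then have "P b y \<in> ?E \<sigma>" using swap[of y "- \<sigma>"] by simp
    moreover have "y = P b (P b y)" using P_involutive[OF b(1)] by simp
    ultimately show "y \<in> P b ` ?E \<sigma>" by blast
  qed (use swap in blast)
  have "inj_on (P b) (span (?E \<sigma>))"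
    by (rule inj_on_inverseI[where g = "P b"]) (rule P_involutive[OF b(1)])
  from dim_image_eq[OF linear_P[OF b(1)] this] have "dim (?E (- \<sigma>)) = dim (?E \<sigma>)"
    by (simp only: image)
  with dims show ?thesis by linarith
qed

text \<open>The projection \<open>v \<mapsto> (v + \<sigma> P a v) / 2\<close> onto the eigenspace keeps the family orthogonal,
  and the bound on the diagonal keeps its members nonzero.\<close>
lemma dim_eigenspace_P_orthogonal_family:
  fixes h :: "'i \<Rightarrow> 'a"
  assumes "a \<le> m" "\<sigma> \<in> {1, -1}" "finite I"
    and orthonormal: "\<And>i j. i \<in> I \<Longrightarrow> j \<in> I \<Longrightarrow> h i \<bullet> h j = (if i = j then 1 else 0)"
    and off_diag: "\<And>i j. i \<in> I \<Longrightarrow> j \<in> I \<Longrightarrow> i \<noteq> j \<Longrightarrow> h i \<bullet> P a (h j) = 0"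
    and diag: "\<And>i. i \<in> I \<Longrightarrow> \<bar>h i \<bullet> P a (h i)\<bar> < 1"
  shows "dim {y \<in> eigenspace_in UNIV (P a) \<sigma>. \<forall>i\<in>I. y \<bullet> h i = 0} + card I
           = dim (eigenspace_in UNIV (P a) \<sigma>)"
proof -
  have \<sigma>: "\<sigma> * \<sigma> = 1" using assms(2) by auto
  define \<pi> where "\<pi> v = (1/2) *\<^sub>R (v + \<sigma> *\<^sub>R P a v)" for v
  have P_a: "P a (x + y) = P a x + P a y" "P a (c *\<^sub>R x) = c *\<^sub>R P a x" "P a (P a x) = x" for x y c
    using linear_P[OF assms(1)] P_involutive[OF assms(1)] by (simp_all add: linear_add linear_scale)
  have \<pi>_eigen: "\<pi> v \<in> eigenspace_in UNIV (P a) \<sigma>" for v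
  proof -
    have "P a (v + \<sigma> *\<^sub>R P a v) = \<sigma> *\<^sub>R (v + \<sigma> *\<^sub>R P a v)"
      using \<sigma> by (simp add: P_a scaleR_add_right add.commute)
    then show ?thesis by (simp add: eigenspace_in_def \<pi>_def P_a)
  qed
  have \<pi>_inner_right: "y \<bullet> \<pi> v = y \<bullet> v" if "y \<in> eigenspace_in UNIV (P a) \<sigma>" for y v
  proof -
    have "y \<bullet> P a v = \<sigma> * (y \<bullet> v)"
      using that P_symmetric[OF assms(1), of y v] by (simp add: eigenspace_in_def)
    then show ?thesis using \<sigma> by (simp add: \<pi>_def inner_add_right mult.assoc[symmetric])
  qed
  have \<pi>_inner: "\<pi> u \<bullet> \<pi> v = (u \<bullet> v + \<sigma> * (u \<bullet> P a v)) / 2" for u v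
    using \<pi>_inner_right[OF \<pi>_eigen[of u], of v] P_symmetric[OF assms(1), of u v]
    by (simp add: inner_commute[of "\<pi> u"] \<pi>_def inner_add_left)
  show ?thesis
  proof (rule dim_orthogonal_complement_in_subspace)
    show "subspace (eigenspace_in UNIV (P a) \<sigma>)" by (rule subspace_eigenspace_in[OF linear_P[OF assms(1)]])
    show "\<pi> (h i) \<bullet> \<pi> (h j) = 0" if "i \<in> I" "j \<in> I" "i \<noteq> j" for i j
      using that orthonormal off_diag by (simp add: \<pi>_inner)
    show "\<pi> (h i) \<noteq> 0" if "i \<in> I" for i
    proof
      assume "\<pi> (h i) = 0"
      then have "1 + \<sigma> * (h i \<bullet> P a (h i)) = 0" using \<pi>_inner[of "h i" "h i"] orthonormal[OF that that] by simp
      then show False using diag[OF that] assms(2) by auto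
    qed
  qed (use assms(3) \<pi>_eigen \<pi>_inner_right in auto)
qed

end

section \<open>The Clifford system built from the matrices \<open>E\<close>\<close>

lemma mat_mult_vector: "mat c *v v = c *\<^sub>R (v :: real^'n)"
  by (simp add: vec_eq_iff matrix_vector_mult_def mat_def if_distrib[of "\<lambda>x. x * _"] cong: if_cong)

lemma matrix_vector_mult_uminus: "(- A) *v v = - (A *v (v::real^'n))"
  by (simp add: matrix_vector_mult_def vec_eq_iff sum_negf)

lemma matrix_vector_mult_neg_right: "(A::real^'n^'m) *v (- v) = - (A *v v)"
  by (simp add: matrix_vector_mult_def vec_eq_iff sum_negf)

locale clifford_matrices =
  fixes E :: "nat \<Rightarrow> real^'l^'l" and m :: nat
  assumes E_orth: "\<forall>\<alpha>\<in>{1..m-1}. orthogonal_matrix (E \<alpha>)"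
    and E_cliff: "\<forall>\<alpha>\<in>{1..m-1}. \<forall>\<beta>\<in>{1..m-1}.
                    E \<alpha> ** E \<beta> + E \<beta> ** E \<alpha> = mat (if \<alpha> = \<beta> then -2 else 0)"
begin

lemma E_mult_self: "k \<in> {1..m-1} \<Longrightarrow> E k ** E k = mat (-1)"
proof -
  assume "k \<in> {1..m-1}"
  then have "E k ** E k + E k ** E k = mat (-2)" using E_cliff by auto
  then have "2 *\<^sub>R (E k ** E k) = 2 *\<^sub>R mat (-1)"
    by (simp add: scaleR_2 vec_eq_iff mat_def)
  then show ?thesis by simp
qed

lemma E_E: "k \<in> {1..m-1} \<Longrightarrow> E k *v (E k *v v) = - v"
  by (simp add: matrix_vector_mul_assoc E_mult_self mat_mult_vector)

lemma E_anticommute: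
  assumes "j \<in> {1..m-1}" "k \<in> {1..m-1}" "j \<noteq> k"
  shows "E j *v (E k *v v) = - (E k *v (E j *v v))"
proof -
  have "E j ** E k + E k ** E j = mat 0" using E_cliff assms by auto
  then have "E j ** E k = - (E k ** E j)" by (simp add: eq_neg_iff_add_eq_0)
  then show ?thesis by (simp add: matrix_vector_mul_assoc matrix_vector_mult_uminus)
qed

lemma inner_E_E: "k \<in> {1..m-1} \<Longrightarrow> (E k *v u) \<bullet> (E k *v v) = u \<bullet> v"
  using E_orth orthogonal_transformation_matrix[of "(*v) (E k)"]
  by (simp add: orthogonal_transformation_def)

lemma inner_E_left: "k \<in> {1..m-1} \<Longrightarrow> (E k *v u) \<bullet> v = - (u \<bullet> (E k *v v))"
  using inner_E_E[of k u "- (E k *v v)"] by (simp add: matrix_vector_mult_neg_right E_E)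

lemma linear_Pmap: "linear (Pmap E i)"
  by (rule linearI) (auto simp: Pmap_def matrix_vector_right_distrib matrix_vector_mult_scaleR)

lemma Pmap_symmetric:
  assumes "i \<le> m"
  shows "Pmap E i u \<bullet> v = u \<bullet> Pmap E i v"
proof (cases "i \<le> 1")
  case False
  with assms have "i - 1 \<in> {1..m-1}" by auto
  from inner_E_left[OF this, of "fst u" "snd v"] inner_E_left[OF this, of "snd u" "fst v"] False
  show ?thesis by (cases u, cases v) (auto simp: Pmap_def inner_commute)
qed (cases u, cases v, auto simp: Pmap_def inner_commute)

lemma Pmap_involutive:
  assumes "i \<le> m"
  shows "Pmap E i (Pmap E i u) = u"
proof (cases "i \<le> 1")
  case False
  with assms have "i - 1 \<in> {1..m-1}" by auto
  from E_E[OF this, of "fst u"] E_E[OF this, of "snd u"] False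
  show ?thesis by (cases u) (auto simp: Pmap_def matrix_vector_mult_neg_right)
qed (cases u, auto simp: Pmap_def)

lemma Pmap_anticommute:
  assumes "i \<le> m" "j \<le> m" "i \<noteq> j"
  shows "Pmap E i (Pmap E j u) = - Pmap E j (Pmap E i u)"
proof -
  consider "i \<le> 1" "j \<le> 1" | "i \<le> 1" "j \<ge> 2" | "i \<ge> 2" "j \<le> 1" | "i \<ge> 2" "j \<ge> 2" by linarith
  then show ?thesis
  proof cases
    case 4
    with assms have "i - 1 \<in> {1..m-1}" "j - 1 \<in> {1..m-1}" "i - 1 \<noteq> j - 1" by auto
    from E_anticommute[OF this] 4 show ?thesis
      by (cases u) (auto simp: Pmap_def matrix_vector_mult_neg_right)
  qed (use assms in \<open>cases u; auto simp: Pmap_def matrix_vector_mult_neg_right\<close>)+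
qed

sublocale symmetric_clifford_system "Pmap E" m
  by (rule symmetric_clifford_system.intro) (rule linear_Pmap Pmap_symmetric Pmap_involutive Pmap_anticommute; assumption)+

text \<open>With \<open>Ehat 0 = Id\<close> we get \<open>Pmap E (j + 1) (x, y) = (Ehat j y, \<plusminus> Ehat j x)\<close> for all \<open>j < m\<close>.\<close>
definition Ehat :: "nat \<Rightarrow> real^'l^'l" where "Ehat j = (if j = 0 then mat 1 else E j)"

lemma inner_Ehat_Ehat:
  assumes "j < m" "k < m"
  shows "(Ehat j *v v) \<bullet> (Ehat k *v v) = (if j = k then v \<bullet> v else 0)"
proof -
  have index: "i \<in> {1..m-1}" if "i < m" "i \<noteq> 0" for i using that by auto
  have skew: "v \<bullet> (E i *v v) = 0" if "i < m" "i \<noteq> 0" for i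
    using inner_E_left[OF index[OF that], of v v] by (simp add: inner_commute)
  have anti: "(E j *v v) \<bullet> (E k *v v) = 0" if "j \<noteq> 0" "k \<noteq> 0" "j \<noteq> k"
  proof -
    have "(E j *v v) \<bullet> (E k *v v) = - (v \<bullet> (E j *v (E k *v v)))"
      and "(E k *v v) \<bullet> (E j *v v) = - (v \<bullet> (E k *v (E j *v v)))"
      using assms that by (simp_all add: inner_E_left index)
    moreover have "E j *v (E k *v v) = - (E k *v (E j *v v))"
      using assms that by (intro E_anticommute index)
    ultimately show ?thesis by (simp add: inner_commute)
  qed
  show ?thesis
    using assms skew anti inner_E_E[OF index, of j v v] by (auto simp: Ehat_def inner_commute)
qed

end

section \<open>The submanifold \<open>M\<^sub>+\<^sup>t\<close>\<close>

locale Mplus_setup = clifford_matrices E m for E :: "nat \<Rightarrow> real^'l^'l" and m +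
  fixes t :: real
  assumes m_pos: "1 \<le> m" and t_pos: "0 < t" and t_less: "t < pi / 2"
begin

abbreviation "P \<equiv> Pmap E"
abbreviation "Q \<equiv> Qmap E t"
abbreviation "M \<equiv> Mplus E m t"

lemma sin_pos: "0 < sin t" and cos_pos: "0 < cos t"
  using t_pos t_less pi_gt3 by (auto intro!: sin_gt_zero cos_gt_zero_pi)

lemma tan_pos: "0 < tan t" and cot_pos: "0 < cot t"
  using sin_pos cos_pos by (simp_all add: tan_def cot_def)

text \<open>Writing \<open>Q 0 = c0 Id + c1 P 0\<close> reduces \<open>Q 0\<close> to the Clifford system; since
  \<open>c1\<^sup>2 - c0\<^sup>2 = tan t * cot t = 1\<close>, its inverse is \<open>c1 P 0 - c0 Id\<close>.\<close>
definition "c0 = (tan t - cot t) / 2"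
definition "c1 = (tan t + cot t) / 2"

lemma Q0_eq: "Q 0 u = c0 *\<^sub>R u + c1 *\<^sub>R P 0 u"
  by (cases u) (simp add: Qmap_def Pmap_def c0_def c1_def algebra_simps diff_divide_distrib
      add_divide_distrib flip: scaleR_add_left scaleR_diff_left)

lemma c1_pos: "0 < c1"
  using tan_pos cot_pos by (simp add: c1_def)

lemma c1_sq_minus_c0_sq: "c1 * c1 - c0 * c0 = 1"
proof -
  have "tan t * cot t = 1" using sin_pos cos_pos by (simp add: tan_def cot_def)
  then show ?thesis by (simp add: c0_def c1_def field_simps; algebra)
qed

lemma Q_eq_P: "i \<noteq> 0 \<Longrightarrow> Q i = P i"
  by (simp add: Qmap_def fun_eq_iff)

lemma linear_Q: "linear (Q i)"
  by (cases "i = 0") (auto simp: Q_eq_P linear_Pmap Qmap_def intro!: linearI simp: algebra_simps)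

lemma Q_symmetric: "i \<le> m \<Longrightarrow> Q i u \<bullet> v = u \<bullet> Q i v"
  by (cases "i = 0") (simp_all add: Q0_eq Q_eq_P P_symmetric inner_add_left inner_add_right)

lemma inner_Q_Suc:
  assumes "j < m"
  shows "(x', y') \<bullet> Q (Suc j) (x, y) = x' \<bullet> (Ehat j *v y) + x \<bullet> (Ehat j *v y')"
proof (cases "j = 0")
  case False
  with assms have "j \<in> {1..m-1}" by auto
  from inner_E_left[OF this, of y' x] False show ?thesis
    by (simp add: Qmap_def Pmap_def Ehat_def inner_commute)
qed (simp add: Qmap_def Pmap_def Ehat_def inner_commute)

lemma mem_Mplus_iff:
  "(x, y) \<in> M \<longleftrightarrow> norm x = cos t \<and> norm y = sin t \<and> (\<forall>j<m. x \<bullet> (Ehat j *v y) = 0)"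
proof -
  have "(\<forall>j<m. x \<bullet> (Ehat j *v y) = 0) \<longleftrightarrow> x \<bullet> y = 0 \<and> (\<forall>\<alpha>\<in>{1..m-1}. x \<bullet> (E \<alpha> *v y) = 0)"
    using m_pos by (auto simp: Ehat_def)
  then show ?thesis by (auto simp: Mplus_def)
qed

lemma Mplus_eq: "M = {z. norm z = 1 \<and> (\<forall>\<alpha>\<in>{0..m}. z \<bullet> Q \<alpha> z = 0)}"
proof (intro set_eqI)
  fix z :: "(real^'l) \<times> (real^'l)"
  obtain x y where z: "z = (x, y)" by fastforce
  have "norm x = cos t \<and> norm y = sin t \<longleftrightarrow> x \<bullet> x = cos t ^ 2 \<and> y \<bullet> y = sin t ^ 2"
    using sin_pos cos_pos by (auto simp: power2_norm_eq_inner[symmetric] power2_eq_iff_nonneg)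
  also have "\<dots> \<longleftrightarrow> x \<bullet> x + y \<bullet> y = 1 \<and> sin t ^ 2 * (x \<bullet> x) = cos t ^ 2 * (y \<bullet> y)"
    using sin_cos_squared_add[of t] by algebra
  also have "\<dots> \<longleftrightarrow> norm z = 1 \<and> z \<bullet> Q 0 z = 0"
    using sin_pos cos_pos by (simp add: z norm_eq_1 Qmap_def tan_def cot_def field_simps power2_eq_square)
  moreover have "(\<forall>\<alpha>\<in>{1..m}. z \<bullet> Q \<alpha> z = 0) \<longleftrightarrow> (\<forall>j<m. x \<bullet> (Ehat j *v y) = 0)"
    unfolding image_Suc_lessThan[symmetric] using inner_Q_Suc[of _ x y x y] by (auto simp: z)
  moreover have "{0..m} = insert 0 {1..m}" by auto
  ultimately show "z \<in> M \<longleftrightarrow> z \<in> {z. norm z = 1 \<and> (\<forall>\<alpha>\<in>{0..m}. z \<bullet> Q \<alpha> z = 0)}"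
    by (auto simp: z mem_Mplus_iff simp del: atLeastAtMost_iff)
qed

lemma Mplus_inner_self: "z \<in> M \<Longrightarrow> z \<bullet> z = 1"
  using Mplus_eq by (auto simp: norm_eq_1)

lemma Mplus_inner_Q: "z \<in> M \<Longrightarrow> i \<le> m \<Longrightarrow> z \<bullet> Q i z = 0"
  using Mplus_eq by auto

lemma Mplus_inner_P: "z \<in> M \<Longrightarrow> 1 \<le> i \<Longrightarrow> i \<le> m \<Longrightarrow> z \<bullet> P i z = 0"
  using Mplus_inner_Q[of z i] by (simp add: Q_eq_P)

lemma Mplus_c0_c1: "z \<in> M \<Longrightarrow> c0 + c1 * (z \<bullet> P 0 z) = 0"
  using Mplus_inner_Q[of z 0] Mplus_inner_self[of z] by (simp add: Q0_eq inner_add_right)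

lemma Q_orthonormal:
  assumes z: "z \<in> M" and "i \<le> m" "j \<le> m"
  shows "Q i z \<bullet> Q j z = (if i = j then 1 else 0)"
proof -
  have Q0_Pj: "Q 0 z \<bullet> P j z = 0" if "1 \<le> j" "j \<le> m" for j
    using that Mplus_inner_P[OF z] inner_P_P_self[of 0 j z]
    by (simp add: Q0_eq inner_add_left P_symmetric)
  have "Q 0 z \<bullet> Q 0 z = c0 * c0 + 2 * c0 * (c1 * (z \<bullet> P 0 z)) + c1 * c1"
    using Mplus_inner_self[OF z] P_isometry[of 0 z z]
    by (simp add: Q0_eq inner_add_right P_symmetric algebra_simps)
  also have "c1 * (z \<bullet> P 0 z) = - c0" using Mplus_c0_c1[OF z] by linarith
  also have "c0 * c0 + 2 * c0 * - c0 + c1 * c1 = c1 * c1 - c0 * c0" by simp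
  finally have "Q 0 z \<bullet> Q 0 z = 1" using c1_sq_minus_c0_sq by simp
  moreover have "P i z \<bullet> P j z = (if i = j then 1 else 0)" if "1 \<le> i" "1 \<le> j"
    using that assms P_symmetric[of i z "P j z"] inner_P_P_self[of i j z] P_involutive[of i z]
      Mplus_inner_self[OF z] by auto
  ultimately show ?thesis
    using assms Q0_Pj Q_eq_P by (cases "i = 0"; cases "j = 0") (auto simp: inner_commute)
qed

lemma norm_Q0: "z \<in> M \<Longrightarrow> norm (Q 0 z) = 1"
  using Q_orthonormal[of z 0 0] by (simp add: norm_eq_1)

subsection \<open>Tangent and normal spaces\<close>

definition TM :: "(real^'l) \<times> (real^'l) \<Rightarrow> ((real^'l) \<times> (real^'l)) set" where
  "TM z = {w. w \<bullet> z = 0 \<and> (\<forall>i\<in>{0..m}. w \<bullet> Q i z = 0)}"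

lemma subspace_TM: "subspace (TM z)"
  by (auto simp: subspace_def TM_def inner_add_left)

lemma tangent_space_subset_TM: "tangent_space M z \<subseteq> TM z"
proof
  fix v assume v: "v \<in> tangent_space M z"
  have "M \<subseteq> {x. x \<bullet> x = 1}" using Mplus_inner_self by auto
  from tangent_space_orthogonal_quadric[where S = "\<lambda>x. x", OF bounded_linear_ident _ this v]
  have "v \<bullet> z = 0" by simp
  moreover have "v \<bullet> Q i z = 0" if "i \<le> m" for i
  proof -
    have "M \<subseteq> {x. x \<bullet> Q i x = 0}" using that Mplus_inner_Q by auto
    with linear_Q[of i] Q_symmetric[OF that] show ?thesis
      by (intro tangent_space_orthogonal_quadric[OF _ _ _ v]) (auto simp: linear_conv_bounded_linear)
  qed
  ultimately show "v \<in> TM z" by (simp add: TM_def)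
qed

lemma rescaled_residual_mem_Mplus:
  fixes u Y :: "real^'l"
  assumes Y: "norm Y = sin t"
  defines "p \<equiv> u - (\<Sum>j<m. (u \<bullet> (Ehat j *v Y) / sin t ^ 2) *\<^sub>R (Ehat j *v Y))"
  assumes "p \<noteq> 0"
  shows "((cos t / norm p) *\<^sub>R p, Y) \<in> M"
proof -
  have "(Ehat i *v Y) \<bullet> (Ehat j *v Y) = (if i = j then sin t ^ 2 else 0)" if "i < m" "j < m" for i j
    using inner_Ehat_Ehat[OF that] Y by (simp add: power2_norm_eq_inner[symmetric])
  then have "p \<bullet> (Ehat j *v Y) = 0" if "j < m" for j
    unfolding p_def using that sin_pos by (intro inner_frame_projection_residual) auto
  then show ?thesis using assms cos_pos by (simp add: mem_Mplus_iff)
qed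

text \<open>The curve: move \<open>y\<close> on the sphere of radius \<open>sin t\<close>, move \<open>x\<close> linearly, remove its
  components along the orthogonal frame \<open>Ehat j y\<close> and rescale it to length \<open>cos t\<close>.\<close>
lemma tangent_vector_Mplus:
  assumes z: "(x, y) \<in> M" and orth: "x \<bullet> x' = 0" "y \<bullet> y' = 0"
    and orth_frame: "\<And>j. j < m \<Longrightarrow> x' \<bullet> (Ehat j *v y) + x \<bullet> (Ehat j *v y') = 0"
  shows "(x', y') \<in> tangent_space M (x, y)"
proof -
  have nx: "norm x = cos t" and ny: "norm y = sin t" and x_frame: "\<And>j. j < m \<Longrightarrow> x \<bullet> (Ehat j *v y) = 0"
    using z by (auto simp: mem_Mplus_iff)
  define Y where "Y s = (sin t / norm (y + s *\<^sub>R y')) *\<^sub>R (y + s *\<^sub>R y')" for s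
  define p where "p s = (x + s *\<^sub>R x') - (\<Sum>j<m. ((x + s *\<^sub>R x') \<bullet> (Ehat j *v Y s) / sin t ^ 2) *\<^sub>R (Ehat j *v Y s))" for s
  define X where "X s = (cos t / norm (p s)) *\<^sub>R p s" for s
  have Y0: "Y 0 = y" using ny sin_pos by (simp add: Y_def)
  have p0: "p 0 = x" using x_frame by (simp add: p_def Y0)
  have "((\<lambda>s. y + s *\<^sub>R y') has_vector_derivative y') (at 0)"
    by (auto simp: has_vector_derivative_def intro!: derivative_eq_intros)
  then have dY: "(Y has_vector_derivative y') (at 0)"
    unfolding Y_def by (rule has_vector_derivative_rescale) (use ny sin_pos orth(2) in auto)
  have dp: "(p has_derivative (\<lambda>h. h *\<^sub>R x')) (at 0)"
    unfolding p_def
  proof (rule has_derivative_remove_frame_components)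
    show "((\<lambda>s. Ehat j *v Y s) has_derivative (\<lambda>h. h *\<^sub>R (Ehat j *v y'))) (at 0)" for j
      using bounded_linear.has_derivative[OF matrix_vector_mul_bounded_linear dY[unfolded has_vector_derivative_def]]
      by (simp add: matrix_vector_mult_scaleR)
    show "((\<lambda>s. x + s *\<^sub>R x') has_derivative (\<lambda>h. h *\<^sub>R x')) (at 0)"
      by (auto intro!: derivative_eq_intros)
  qed (use sin_pos x_frame orth_frame Y0 in auto)
  have dX: "(X has_vector_derivative x') (at 0)"
    unfolding X_def using dp
    by (intro has_vector_derivative_rescale) (use nx cos_pos orth(1) p0 in \<open>auto simp: has_vector_derivative_def\<close>)
  obtain e where "e > 0" and e: "\<And>s. dist s 0 < e \<Longrightarrow> dist (p s) (p 0) < cos t"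
    using has_derivative_continuous[OF dp] cos_pos unfolding continuous_at_eps_delta by blast
  have p_nonzero: "p s \<noteq> 0" if "\<bar>s\<bar> < e" for s
    using e[of s] that p0 nx by (auto simp: dist_real_def)
  have "(X s, Y s) \<in> M" if "\<bar>s\<bar> < e" for s
  proof -
    have "(y + s *\<^sub>R y') \<bullet> (y + s *\<^sub>R y') = y \<bullet> y + (s * s) * (y' \<bullet> y')"
      using orth(2) by (simp add: inner_add_left inner_add_right inner_commute)
    also have "\<dots> > 0" using ny sin_pos by (simp add: power2_norm_eq_inner[symmetric] add_pos_nonneg)
    finally have "y + s *\<^sub>R y' \<noteq> 0" by auto
    then have "norm (Y s) = sin t" using sin_pos by (simp add: Y_def)
    from rescaled_residual_mem_Mplus[OF this, of "x + s *\<^sub>R x'"] p_nonzero[OF that]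
    show ?thesis by (simp add: X_def p_def)
  qed
  then show ?thesis unfolding tangent_space_def
    using \<open>e > 0\<close> Y0 p0 nx cos_pos has_vector_derivative_Pair[OF dX dY]
    by (intro CollectI exI[of _ "\<lambda>s. (X s, Y s)"] exI[of _ e]) (auto simp: X_def)
qed

lemma TM_subset_tangent_space:
  assumes z: "z \<in> M"
  shows "TM z \<subseteq> tangent_space M z"
proof
  fix w assume w: "w \<in> TM z"
  obtain x y x' y' where zxy: "z = (x, y)" and wxy: "w = (x', y')" by fastforce
  have "w \<bullet> z = 0" "w \<bullet> Q 0 z = 0" using w by (auto simp: TM_def)
  then have sum: "x' \<bullet> x + y' \<bullet> y = 0" and diff: "tan t * (x' \<bullet> x) - cot t * (y' \<bullet> y) = 0"
    by (auto simp: zxy wxy Qmap_def)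
  have "(tan t + cot t) * (x' \<bullet> x) = cot t * (x' \<bullet> x + y' \<bullet> y) + (tan t * (x' \<bullet> x) - cot t * (y' \<bullet> y))"
    by (simp add: algebra_simps)
  with sum diff have "(tan t + cot t) * (x' \<bullet> x) = 0" by simp
  with sum have "x \<bullet> x' = 0" "y \<bullet> y' = 0"
    using tan_pos cot_pos by (simp_all add: inner_commute)
  moreover have "x' \<bullet> (Ehat j *v y) + x \<bullet> (Ehat j *v y') = 0" if "j < m" for j
    using w that inner_Q_Suc[OF that, of x' y' x y] by (auto simp: TM_def zxy wxy)
  ultimately show "w \<in> tangent_space M z" using tangent_vector_Mplus z by (simp add: zxy wxy)
qed

lemma tangent_space_eq_TM: "z \<in> M \<Longrightarrow> tangent_space M z = TM z"
  using tangent_space_subset_TM TM_subset_tangent_space by blast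

lemma tangent_space_Mplus:
  "z \<in> M \<Longrightarrow> tangent_space M z = {w. w \<bullet> z = 0 \<and> (\<forall>i\<in>{0..m}. w \<bullet> Q i z = 0)}"
  by (simp add: tangent_space_eq_TM TM_def)

lemma TM_eq: "TM z = {w. w \<bullet> z = 0 \<and> (\<forall>g\<in>(\<lambda>i. Q i z) ` {0..m}. w \<bullet> g = 0)}"
  by (auto simp: TM_def)

lemma normal_space_Mplus:
  assumes "z \<in> M"
  shows "normal_space_sphere M z = span ((\<lambda>i. Q i z) ` {0..m})"
  unfolding normal_space_sphere_def tangent_space_eq_TM[OF assms] TM_eq
  using Mplus_inner_Q[OF assms] by (intro orthogonal_complement_constraints) (auto simp: inner_commute)

lemma tangent_normal_direct_sum:
  assumes "z \<in> M"
  shows "direct_sum3 UNIV (tangent_space M z) (normal_space_sphere M z) (span {z})"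
  unfolding normal_space_Mplus[OF assms] tangent_space_eq_TM[OF assms] TM_eq
  using Mplus_inner_Q[OF assms] by (intro direct_sum3_constraints) (auto simp: inner_commute)

lemma dim_TM:
  assumes z: "z \<in> M"
  shows "dim (TM z) + (m + 2) = 2 * CARD('l)"
proof -
  define h where "h i = (if i = Suc m then z else Q i z)" for i
  have "dim {y \<in> UNIV. \<forall>i\<in>{0..Suc m}. y \<bullet> h i = 0} + card {0..Suc m} = dim (UNIV :: ((real^'l) \<times> (real^'l)) set)"
  proof (rule dim_orthogonal_complement_in_subspace[where \<pi> = id])
    show "id (h i) \<bullet> id (h j) = 0" if "i \<in> {0..Suc m}" "j \<in> {0..Suc m}" "i \<noteq> j" for i j
      using that Q_orthonormal[OF z] Mplus_inner_Q[OF z] by (auto simp: h_def inner_commute)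
    show "id (h i) \<noteq> 0" if "i \<in> {0..Suc m}" for i
      using that Q_orthonormal[OF z, of i i] Mplus_inner_self[OF z] by (auto simp: h_def)
  qed auto
  moreover have "{y \<in> UNIV. \<forall>i\<in>{0..Suc m}. y \<bullet> h i = 0} = TM z"
    by (auto simp: TM_def h_def inner_commute)
  ultimately show ?thesis by simp
qed

lemma shape_operator_Q:
  assumes "z \<in> M"
  shows "shape_operator M (Q i) z = (\<lambda>X. - orth_proj (TM z) (Q i X))"
proof -
  have "(Q i has_derivative Q i) (at z)"
    using linear_Q by (simp add: bounded_linear_imp_has_derivative linear_conv_bounded_linear)
  then have "frechet_derivative (Q i) (at z) = Q i" by (rule frechet_derivative_at[symmetric])
  then show ?thesis by (simp add: fun_eq_iff shape_operator_def tangent_space_eq_TM[OF assms])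
qed

subsection \<open>Principal curvatures\<close>

text \<open>The orthonormal family \<open>z, Q b z (b \<noteq> a)\<close>; together with \<open>Q a z\<close> it spans the orthogonal
  complement of \<open>TM z\<close>.\<close>
definition frame :: "(real^'l) \<times> (real^'l) \<Rightarrow> nat \<Rightarrow> nat \<Rightarrow> (real^'l) \<times> (real^'l)" where
  "frame z a b = (if b = a then z else Q b z)"

lemma frame_orthonormal:
  "z \<in> M \<Longrightarrow> b \<le> m \<Longrightarrow> c \<le> m \<Longrightarrow> frame z a b \<bullet> frame z a c = (if b = c then 1 else 0)"
  using Q_orthonormal[of z b c] Mplus_inner_Q[of z b] Mplus_inner_Q[of z c] Mplus_inner_self[of z]
  by (auto simp: frame_def inner_commute)

lemma frame_inner_P:
  assumes z: "z \<in> M" and a: "a \<in> {1..m}" and "b \<le> m" "c \<le> m"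
  shows "frame z a b \<bullet> P a (frame z a c) = 0"
proof -
  define S where "S = insert z ((\<lambda>b. P b z) ` ({0..m} - {a}))"
  have a_le: "a \<le> m" using a by simp
  have S_orth: "x \<bullet> P a y = 0" if "x \<in> S" "y \<in> S" for x y
  proof -
    have zPz: "z \<bullet> P a z = 0" using Mplus_inner_P[OF z] a by simp
    have zPP: "z \<bullet> P a (P c z) = 0" if "c \<le> m" "c \<noteq> a" for c
      using that a_le by (simp add: inner_P_P_self)
    have PPP: "P b z \<bullet> P a (P c z) = 0" if "b \<le> m" "c \<le> m" "b \<noteq> a" "c \<noteq> a" for b c
      using that a_le zPz by (cases "b = c") (simp_all add: P_symmetric P_sandwich inner_P_P_P_self)
    have PP: "P b z \<bullet> P a z = 0" if "b \<le> m" "b \<noteq> a" for b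
      using that a_le by (simp add: P_symmetric inner_P_P_self)
    have S: "w = z \<or> (\<exists>b. b \<le> m \<and> b \<noteq> a \<and> w = P b z)" if "w \<in> S" for w
      using that by (auto simp: S_def)
    from S[OF that(1)] S[OF that(2)] show ?thesis
      by (elim disjE exE conjE) (simp_all add: zPz zPP PPP PP)
  qed
  have frame_span: "frame z a b \<in> span S" if "b \<le> m" for b
  proof -
    have z: "z \<in> span S" by (simp add: S_def span_base)
    have P: "P c z \<in> span S" if "c \<le> m" "c \<noteq> a" for c
      using that by (auto simp: S_def intro: span_base)
    have "Q 0 z \<in> span S"
      using a z P[of 0] by (simp add: Q0_eq span_add span_scale)
    then show ?thesis using z P[OF \<open>b \<le> m\<close>] by (cases "b = 0") (auto simp: frame_def Q_eq_P)
  qed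
  show ?thesis
    by (rule inner_linear_span_eq_0[OF linear_Pmap S_orth frame_span frame_span]) (use assms in auto)
qed

lemma frame_inner_P0:
  assumes z: "z \<in> M" and "b \<le> m" "c \<le> m"
  shows "b \<noteq> c \<Longrightarrow> frame z 0 b \<bullet> P 0 (frame z 0 c) = 0"
    and "\<bar>frame z 0 b \<bullet> P 0 (frame z 0 b)\<bar> < 1"
proof -
  have frame: "frame z 0 b = (if b = 0 then z else P b z)" for b by (simp add: frame_def Q_eq_P)
  show "b \<noteq> c \<Longrightarrow> frame z 0 b \<bullet> P 0 (frame z 0 c) = 0"
    using assms by (auto simp: frame P_symmetric inner_P_P_self inner_P_P_P_self)
  have "\<bar>c0\<bar> < c1"
    using power2_less_imp_less[of "\<bar>c0\<bar>" c1] c1_sq_minus_c0_sq c1_pos by (simp add: power2_eq_square)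
  moreover have "c1 * \<bar>z \<bullet> P 0 z\<bar> = \<bar>c0\<bar>"
    using Mplus_c0_c1[OF z] c1_pos by (simp add: abs_mult eq_neg_iff_add_eq_0[symmetric])
  ultimately have "\<bar>z \<bullet> P 0 z\<bar> < 1" using c1_pos by (metis mult.right_neutral mult_less_cancel_left_pos)
  then show "\<bar>frame z 0 b \<bullet> P 0 (frame z 0 b)\<bar> < 1"
    using assms by (auto simp: frame P_symmetric P_sandwich)
qed

lemma eigenspace_P_inter_TM:
  assumes z: "z \<in> M" and a: "a \<le> m" and \<sigma>: "\<sigma> \<in> {1, -1}"
  shows "{y \<in> eigenspace_in UNIV (P a) \<sigma>. \<forall>b\<in>{0..m}. y \<bullet> frame z a b = 0}
           = eigenspace_in UNIV (P a) \<sigma> \<inter> TM z"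
proof (intro equalityI subsetI)
  fix y assume y: "y \<in> {y \<in> eigenspace_in UNIV (P a) \<sigma>. \<forall>b\<in>{0..m}. y \<bullet> frame z a b = 0}"
  then have "y \<bullet> z = 0" using a by (force simp: frame_def)
  moreover have "y \<bullet> P a z = 0"
    using y \<open>y \<bullet> z = 0\<close> P_symmetric[OF a, of y z] by (simp add: eigenspace_in_def)
  then have "y \<bullet> Q a z = 0" using \<open>y \<bullet> z = 0\<close> by (cases "a = 0") (simp_all add: Q0_eq Q_eq_P inner_add_right)
  then have "y \<bullet> Q b z = 0" if "b \<le> m" for b
    using y that by (cases "b = a") (force simp: frame_def)+
  ultimately show "y \<in> eigenspace_in UNIV (P a) \<sigma> \<inter> TM z"
    using y by (auto simp: TM_def)
qed (auto simp: TM_def frame_def)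

lemma dim_eigenspace_P_inter_TM:
  assumes z: "z \<in> M" and a: "a \<le> m" and \<sigma>: "\<sigma> \<in> {1, -1}"
  shows "dim (eigenspace_in UNIV (P a) \<sigma> \<inter> TM z) + (m + 1) = CARD('l)"
proof -
  have "dim {y \<in> eigenspace_in UNIV (P a) \<sigma>. \<forall>b\<in>{0..m}. y \<bullet> frame z a b = 0} + card {0..m}
      = dim (eigenspace_in UNIV (P a) \<sigma>)"
  proof (rule dim_eigenspace_P_orthogonal_family[OF a \<sigma>])
    show "frame z a b \<bullet> P a (frame z a c) = 0" if "b \<in> {0..m}" "c \<in> {0..m}" "b \<noteq> c" for b c
      using that a frame_inner_P[OF z, of a b c] frame_inner_P0[OF z, of b c] by (cases "a = 0") auto
    show "\<bar>frame z a b \<bullet> P a (frame z a b)\<bar> < 1" if "b \<in> {0..m}" for b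
      using that a frame_inner_P[OF z, of a b b] frame_inner_P0[OF z, of b b] by (cases "a = 0") auto
  qed (use frame_orthonormal[OF z] in auto)
  moreover have "2 * dim (eigenspace_in UNIV (P a) \<sigma>) = 2 * CARD('l)"
    using dim_eigenspace_P[OF m_pos a \<sigma>] by simp
  ultimately show ?thesis using eigenspace_P_inter_TM[OF assms] by simp
qed

lemma Q_Q_mem_TM:
  assumes z: "z \<in> M" and a: "a \<in> {1..m}" and "\<beta> \<le> m" "\<beta> \<noteq> a"
  shows "Q a (Q \<beta> z) \<in> TM z"
proof -
  have a_le: "a \<le> m" and Qa: "Q a = P a" using a Q_eq_P[of a] by auto
  have frame: "Q a (Q \<beta> z) \<bullet> frame z a c = 0" if "c \<le> m" for c
    using frame_inner_P[OF z a \<open>\<beta> \<le> m\<close> that] \<open>\<beta> \<noteq> a\<close> a_le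
    by (simp add: Qa P_symmetric frame_def split: if_splits)
  have "Q a (Q \<beta> z) \<bullet> Q a z = 0"
    using Mplus_inner_Q[OF z \<open>\<beta> \<le> m\<close>] a_le by (simp add: Qa P_isometry inner_commute)
  then have "Q a (Q \<beta> z) \<bullet> Q i z = 0" if "i \<le> m" for i
    using frame[OF that] by (cases "i = a") (simp_all add: frame_def)
  moreover have "Q a (Q \<beta> z) \<bullet> z = 0" using frame[OF a_le] by (simp add: frame_def)
  ultimately show ?thesis by (simp add: TM_def)
qed

lemma dim_span_Q_Q:
  assumes z: "z \<in> M" and a: "a \<in> {1..m}"
  shows "dim (span ((\<lambda>\<beta>. Q a (Q \<beta> z)) ` ({0..m} - {a}))) = m"
proof -
  have Q_iso: "Q a u \<bullet> Q a v = u \<bullet> v" for u v using a by (simp add: Q_eq_P P_isometry)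
  have "dim (span ((\<lambda>\<beta>. Q a (Q \<beta> z)) ` ({0..m} - {a}))) = card ({0..m} - {a})"
  proof (rule dim_span_pairwise_orthogonal)
    show "Q a (Q i z) \<noteq> 0" if "i \<in> {0..m} - {a}" for i
      using Q_iso[of "Q i z" "Q i z"] Q_orthonormal[OF z, of i i] that by auto
  qed (use Q_orthonormal[OF z] in \<open>auto simp: Q_iso\<close>)
  then show ?thesis using a by simp
qed

lemma principal_spaces_Q:
  assumes z: "z \<in> M" and a: "a \<in> {1..m}"
  shows "let T = tangent_space M z;
             A = shape_operator M (Q a) z;
             Ep = eigenspace_in T A 1;
             E0 = eigenspace_in T A 0;
             Em = eigenspace_in T A (-1)
         in {c. \<exists>X\<in>T. X \<noteq> 0 \<and> A X = c *\<^sub>R X} \<subseteq> {1, 0, -1} \<and>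
         Ep = eigenspace_in UNIV (Q a) (-1) \<inter> T \<and>
         E0 = span ((\<lambda>\<beta>. Q a (Q \<beta> z)) ` ({0..m} - {a})) \<and>
         Em = eigenspace_in UNIV (Q a) 1 \<inter> T \<and>
         int (dim Ep) = int CARD('l) - int m - 1 \<and>
         int (dim E0) = int m \<and>
         int (dim Em) = int CARD('l) - int m - 1 \<and>
         direct_sum3 T Ep E0 Em"
proof -
  have a_le: "a \<le> m" and Qa: "Q a = P a" using a Q_eq_P[of a] by auto
  let ?G = "(\<lambda>\<beta>. Q a (Q \<beta> z)) ` ({0..m} - {a})"
  have G_TM: "?G \<subseteq> TM z" using Q_Q_mem_TM[OF z a] unfolding image_subset_iff by simp
  have SG: "Q a g \<bullet> w = 0" if "g \<in> ?G" "w \<in> TM z" for g w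
    using that a_le by (auto simp: Qa P_involutive TM_def inner_commute)
  have dim_Ep: "dim (eigenspace_in UNIV (Q a) (-1) \<inter> TM z) + (m + 1) = CARD('l)"
    and dim_Em: "dim (eigenspace_in UNIV (Q a) 1 \<inter> TM z) + (m + 1) = CARD('l)"
    unfolding Qa using dim_eigenspace_P_inter_TM[OF z a_le] by auto
  then have "dim (eigenspace_in UNIV (Q a) (-1) \<inter> TM z) + dim (span ?G)
      + dim (eigenspace_in UNIV (Q a) 1 \<inter> TM z) = dim (TM z)"
    using dim_span_Q_Q[OF z a] dim_TM[OF z] by linarith
  note principal = principal_spaces_symmetric[OF subspace_TM linear_Q Q_symmetric[OF a_le] G_TM SG _ _ _ this]
  show ?thesis
    unfolding Let_def tangent_space_eq_TM[OF z] shape_operator_Q[OF z]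
    using principal dim_Ep dim_Em dim_span_Q_Q[OF z a] by simp
qed

lemma inv_Q0: "inv (Q 0) u = c1 *\<^sub>R P 0 u - c0 *\<^sub>R u"
proof -
  define R where "R u = c1 *\<^sub>R P 0 u - c0 *\<^sub>R u" for u
  have "Q 0 (R u) = u" "R (Q 0 u) = u" for u
    using c1_sq_minus_c0_sq P_involutive[of 0]
    by (simp_all add: R_def Q0_eq linear_add[OF linear_Pmap] linear_diff[OF linear_Pmap]
        linear_scale[OF linear_Pmap] algebra_simps flip: scaleR_add_left scaleR_diff_left)
  then have "inv (Q 0) = R" by (intro inv_equality) auto
  then show ?thesis by (simp add: R_def)
qed

lemma Q0_inv: "Q 0 (inv (Q 0) u) = u"
  using c1_sq_minus_c0_sq P_involutive[of 0]
  by (simp add: inv_Q0 Q0_eq linear_diff[OF linear_Pmap] linear_scale[OF linear_Pmap] algebra_simps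
      flip: scaleR_add_left scaleR_diff_left)

lemma eigenspace_Q0: "eigenspace_in UNIV (Q 0) (c0 + c1 * \<sigma>) = eigenspace_in UNIV (P 0) \<sigma>"
proof -
  have "Q 0 = (\<lambda>v. c0 *\<^sub>R v + c1 *\<^sub>R P 0 v)" by (simp add: fun_eq_iff Q0_eq)
  then show ?thesis using c1_pos by (simp add: eigenspace_in_scaleR_add)
qed

lemma inner_inv_Q0_Q_P:
  assumes z: "z \<in> M" and "\<alpha> \<in> {1..m}" "\<beta> \<in> {1..m}"
  shows "inv (Q 0) (Q \<alpha> z) \<bullet> P \<beta> z = 0"
proof -
  have "inv (Q 0) (Q \<alpha> z) \<bullet> P \<beta> z = c1 * (z \<bullet> P \<alpha> (P 0 (P \<beta> z))) - c0 * (z \<bullet> P \<alpha> (P \<beta> z))"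
    using assms by (simp add: inv_Q0 Q_eq_P inner_diff_left P_symmetric)
  also have "\<dots> = 0"
  proof (cases "\<alpha> = \<beta>")
    case True
    then show ?thesis
      using assms P_sandwich[of \<alpha> 0 z] P_involutive[of \<alpha> z] Mplus_inner_self[OF z] Mplus_c0_c1[OF z]
      by (simp add: P_symmetric[of \<alpha>] algebra_simps)
  qed (use assms inner_P_P_P_self[of \<alpha> 0 \<beta> z] inner_P_P_self[of \<alpha> \<beta> z] in simp)
  finally show ?thesis .
qed

lemma inv_Q0_Q_mem_TM:
  assumes z: "z \<in> M" and \<alpha>: "\<alpha> \<in> {1..m}"
  shows "inv (Q 0) (Q \<alpha> z) \<in> TM z"
proof -
  have "inv (Q 0) (Q \<alpha> z) \<bullet> z = 0"
    using \<alpha> inner_P_P_self[of 0 \<alpha> z] Mplus_inner_P[OF z, of \<alpha>]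
    by (auto simp: inv_Q0 Q_eq_P inner_diff_right P_symmetric[of 0] inner_commute)
  moreover have "inv (Q 0) (Q \<alpha> z) \<bullet> Q \<beta> z = 0" if "\<beta> \<le> m" for \<beta>
  proof (cases "\<beta> = 0")
    case True
    have "inv (Q 0) (Q \<alpha> z) \<bullet> Q 0 z = Q 0 (inv (Q 0) (Q \<alpha> z)) \<bullet> z" by (simp add: Q_symmetric)
    then show ?thesis using True Mplus_inner_Q[OF z, of \<alpha>] \<alpha> by (simp add: Q0_inv inner_commute)
  qed (use inner_inv_Q0_Q_P[OF z \<alpha>, of \<beta>] that in \<open>simp add: Q_eq_P\<close>)
  ultimately show ?thesis by (simp add: TM_def)
qed

lemma dim_span_inv_Q0_Q:
  assumes z: "z \<in> M"
  shows "dim (span ((\<lambda>\<alpha>. inv (Q 0) (Q \<alpha> z)) ` {1..m})) = m"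
proof -
  have "dim (span ((\<lambda>\<alpha>. inv (Q 0) (Q \<alpha> z)) ` {1..m})) = card {1..m}"
  proof (rule dim_span_pairwise_orthogonal)
    show "inv (Q 0) (Q \<alpha> z) \<bullet> inv (Q 0) (Q \<beta> z) = 0"
      if "\<alpha> \<in> {1..m}" "\<beta> \<in> {1..m}" "\<alpha> \<noteq> \<beta>" for \<alpha> \<beta>
    proof -
      have "inv (Q 0) (Q \<alpha> z) \<bullet> P 0 (P \<beta> z) = c1 * (z \<bullet> P \<alpha> (P \<beta> z)) - c0 * (z \<bullet> P \<alpha> (P 0 (P \<beta> z)))"
        using that by (simp add: inv_Q0 Q_eq_P inner_diff_left P_isometry P_symmetric P_involutive)
      also have "\<dots> = 0"
        using that inner_P_P_self[of \<alpha> \<beta> z] inner_P_P_P_self[of \<alpha> 0 \<beta> z] by simp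
      finally have "inv (Q 0) (Q \<alpha> z) \<bullet> P 0 (P \<beta> z) = 0" .
      moreover have "inv (Q 0) (Q \<beta> z) = c1 *\<^sub>R P 0 (P \<beta> z) - c0 *\<^sub>R P \<beta> z"
        using that by (simp add: inv_Q0 Q_eq_P)
      ultimately show ?thesis
        using inner_inv_Q0_Q_P[OF z that(1,2)] by (simp add: inner_diff_right)
    qed
    show "inv (Q 0) (Q \<alpha> z) \<noteq> 0" if "\<alpha> \<in> {1..m}" for \<alpha>
      using Q0_inv[of "Q \<alpha> z"] Q_orthonormal[OF z, of \<alpha> \<alpha>] that linear_0[OF linear_Q] by force
  qed simp
  then show ?thesis by simp
qed

lemma principal_spaces_Q0:
  assumes z: "z \<in> M"
  shows "let T = tangent_space M z;
             A = shape_operator M (Q 0) z;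
             Ep = eigenspace_in T A (cot t);
             E0 = eigenspace_in T A 0;
             Em = eigenspace_in T A (- tan t)
         in norm (Q 0 z) = 1 \<and>
            {c. \<exists>X\<in>T. X \<noteq> 0 \<and> A X = c *\<^sub>R X} \<subseteq> {cot t, 0, - tan t} \<and>
            Ep = eigenspace_in UNIV (Q 0) (- cot t) \<inter> T \<and>
            E0 = span ((\<lambda>\<alpha>. inv (Q 0) (Q \<alpha> z)) ` {1..m}) \<and>
            Em = eigenspace_in UNIV (Q 0) (tan t) \<inter> T \<and>
            int (dim Ep) = int CARD('l) - int m - 1 \<and>
            int (dim E0) = int m \<and>
            int (dim Em) = int CARD('l) - int m - 1 \<and>
            direct_sum3 T Ep E0 Em"
proof -
  let ?G = "(\<lambda>\<alpha>. inv (Q 0) (Q \<alpha> z)) ` {1..m}"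
  have G_TM: "?G \<subseteq> TM z" using inv_Q0_Q_mem_TM[OF z] unfolding image_subset_iff by simp
  have SG: "Q 0 g \<bullet> w = 0" if "g \<in> ?G" "w \<in> TM z" for g w
    using that by (auto simp: Q0_inv TM_def inner_commute)
  have "eigenspace_in UNIV (Q 0) (- cot t) = eigenspace_in UNIV (P 0) (-1)"
    "eigenspace_in UNIV (Q 0) (tan t) = eigenspace_in UNIV (P 0) 1"
    using eigenspace_Q0[of "-1"] eigenspace_Q0[of 1] by (simp_all add: c0_def c1_def field_simps)
  then have dim_Ep: "dim (eigenspace_in UNIV (Q 0) (- cot t) \<inter> TM z) + (m + 1) = CARD('l)"
    and dim_Em: "dim (eigenspace_in UNIV (Q 0) (tan t) \<inter> TM z) + (m + 1) = CARD('l)"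
    using dim_eigenspace_P_inter_TM[OF z] by auto
  then have "dim (eigenspace_in UNIV (Q 0) (- cot t) \<inter> TM z) + dim (span ?G)
      + dim (eigenspace_in UNIV (Q 0) (tan t) \<inter> TM z) = dim (TM z)"
    using dim_span_inv_Q0_Q[OF z] dim_TM[OF z] by linarith
  note principal = principal_spaces_symmetric[OF subspace_TM linear_Q Q_symmetric[of 0] G_TM SG _ _ _ this]
  show ?thesis
    unfolding Let_def tangent_space_eq_TM[OF z] shape_operator_Q[OF z]
    using principal dim_Ep dim_Em dim_span_inv_Q0_Q[OF z] tan_pos cot_pos norm_Q0[OF z] by simp
qed

end

theorem proposition3p2:
  fixes E :: "nat \<Rightarrow> real^'l^'l" and m :: nat and t :: real
  assumes m_pos: "m \<ge> 1"
    and E_orth: "\<forall>\<alpha>\<in>{1..m-1}. orthogonal_matrix (E \<alpha>)"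
    and E_cliff: "\<forall>\<alpha>\<in>{1..m-1}. \<forall>\<beta>\<in>{1..m-1}.
                    E \<alpha> ** E \<beta> + E \<beta> ** E \<alpha> = mat (if \<alpha> = \<beta> then -2 else 0)"
    and t_pos: "0 < t" and t_le: "t \<le> pi / 4"
  shows
    "Mplus E m t = {z. norm z = 1 \<and> (\<forall>\<alpha>\<in>{0..m}. z \<bullet> Qmap E t \<alpha> z = 0)} \<and>
     (\<forall>z\<in>Mplus E m t.
       \<comment> \<open>(1)\<close>
       normal_space_sphere (Mplus E m t) z = span ((\<lambda>\<alpha>. Qmap E t \<alpha> z) ` {0..m}) \<and>
       tangent_space (Mplus E m t) z = {w. w \<bullet> z = 0 \<and> (\<forall>i\<in>{0..m}. w \<bullet> Qmap E t i z = 0)} \<and>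
       direct_sum3 UNIV (tangent_space (Mplus E m t) z) (normal_space_sphere (Mplus E m t) z) (span {z}) \<and>
       \<comment> \<open>(2)\<close>
       (\<forall>\<alpha>\<in>{1..m}.
          let T = tangent_space (Mplus E m t) z;
              A = shape_operator (Mplus E m t) (Qmap E t \<alpha>) z;
              Ep = eigenspace_in T A 1;
              E0 = eigenspace_in T A 0;
              Em = eigenspace_in T A (-1)
          in {c. \<exists>X\<in>T. X \<noteq> 0 \<and> A X = c *\<^sub>R X} \<subseteq> {1, 0, -1} \<and>
             Ep = eigenspace_in UNIV (Qmap E t \<alpha>) (-1) \<inter> T \<and>
             E0 = span ((\<lambda>\<beta>. Qmap E t \<alpha> (Qmap E t \<beta> z)) ` ({0..m} - {\<alpha>})) \<and>
             Em = eigenspace_in UNIV (Qmap E t \<alpha>) 1 \<inter> T \<and>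
             int (dim Ep) = int CARD('l) - int m - 1 \<and>
             int (dim E0) = int m \<and>
             int (dim Em) = int CARD('l) - int m - 1 \<and>
             direct_sum3 T Ep E0 Em) \<and>
       \<comment> \<open>(3)\<close>
       (let T = tangent_space (Mplus E m t) z;
            A = shape_operator (Mplus E m t) (Qmap E t 0) z;
            Ep = eigenspace_in T A (cot t);
            E0 = eigenspace_in T A 0;
            Em = eigenspace_in T A (- tan t)
        in norm (Qmap E t 0 z) = 1 \<and>
           {c. \<exists>X\<in>T. X \<noteq> 0 \<and> A X = c *\<^sub>R X} \<subseteq> {cot t, 0, - tan t} \<and>
           Ep = eigenspace_in UNIV (Qmap E t 0) (- cot t) \<inter> T \<and>
           E0 = span ((\<lambda>\<alpha>. inv (Qmap E t 0) (Qmap E t \<alpha> z)) ` {1..m}) \<and>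
           Em = eigenspace_in UNIV (Qmap E t 0) (tan t) \<inter> T \<and>
           int (dim Ep) = int CARD('l) - int m - 1 \<and>
           int (dim E0) = int m \<and>
           int (dim Em) = int CARD('l) - int m - 1 \<and>
           direct_sum3 T Ep E0 Em))"
proof -
  interpret Mplus_setup E m t
    using assms pi_gt_zero by unfold_locales auto
  show ?thesis
    by (intro conjI ballI Mplus_eq normal_space_Mplus tangent_space_Mplus tangent_normal_direct_sum
        principal_spaces_Q principal_spaces_Q0) assumption+
qed

end
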